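(* Let $a:[0,1]\to[0,\infty)$ be bounded and measurable, let $T_0>0$ be the uniform observability time described in the context, let $T>T_0$, and let $\lambda\in H^1(0,T)$ with $\lambda(0)\ne0$. Then there exists $\kappa>0$, independent of $N$ (i.e. of $h$), such that for every $N\ge1$ and all $\widehat F_h,\widetilde F_h\in\mathbb{C}^N$, $$\|\widehat F_h-\widetilde F_h\|_M\le \kappa\,\|\widehat Y_h-\widetilde Y_h\|_{[L^2(0,T)]^2},$$ where, for $F_h\in\{\widehat F_h,\widetilde F_h\}$, $V_h=[v_j]_{1\le j\le N}$ is the solution of $M_hV_h''+K_hV_h+L_hV_h=\lambda(t)M_hF_h$ on $(0,T)$, $V_h(0)=V_h'(0)=0$, and the observation is $Y_h(t)=\big(\tfrac1h(v_1'(t)+u_1(t)),\ \tfrac12(v_1''(t)+u_1'(t))\big)$, with $U_h=[u_j]$ a fixed (the same for both) solution of $M_hU_h''+K_hU_h+L_hU_h=0$. (In particular $\widehat Y_h-\widetilde Y_h=\big(\tfrac1h(\widehat v_1'-\widetilde v_1'),\tfrac12(\widehat v_1''-\widetilde v_1'')\big)$ does not depend on $U_h$.)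
   Context: For $N\ge1$, $h=1/(N+1)$, $x_j=jh$, $a_j=a(x_j)$. Matrices: $K_h=\frac1h\mathrm{tridiag}(-1,2,-1)$, $M_h=\frac h4\mathrm{tridiag}(1,2,1)$, $L_h=h\,\mathrm{diag}(a_1,\dots,a_N)$ (all $N\times N$). On $\mathbb{C}^N$: $\langle U,W\rangle=\sum_j u_j\overline{w_j}$, $\langle U,W\rangle_1=\langle(K_h+L_h)U,W\rangle$, $\langle U,W\rangle_M=\langle M_hU,W\rangle$, norms $\|\cdot\|_1,\|\cdot\|_M$. $T_0>0$ denotes a time, independent of $h$, for which there is $\kappa_0>0$ independent of $h$ such that for all $N$, all $T>T_0$ and all $U^0,U^1\in\mathbb{C}^N$, the solution $U_h=[u_j]$ of $M_hU_h''+K_hU_h+L_hU_h=0$, $U_h(0)=U^0$, $U_h'(0)=U^1$ satisfies $\int_0^T(|u_1/h|^2+|u_1'/2|^2)dt\ge\kappa_0(\|U^0\|_1^2+\|U^1\|_M^2)$ (such $T_0$ exists for bounded measurable $a\ge0$). *)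

theory Defs
  imports "HOL-Analysis.Analysis"
begin

text \<open>Vectors of \<open>\<complex>\<^sup>N\<close> are represented as functions \<open>nat \<Rightarrow> complex\<close>,
  only the components with indices \<open>1..N\<close> being relevant. Matrices are
  functions \<open>nat \<Rightarrow> nat \<Rightarrow> real\<close> with indices in \<open>1..N\<close>.\<close>

definition hN :: "nat \<Rightarrow> real" where
  "hN N = 1 / (real N + 1)"

definition Kh :: "nat \<Rightarrow> nat \<Rightarrow> nat \<Rightarrow> real" where
  "Kh N i j = (1 / hN N) * (if i = j then 2 else if i = j + 1 \<or> j = i + 1 then -1 else 0)"

definition Mh :: "nat \<Rightarrow> nat \<Rightarrow> nat \<Rightarrow> real" where
  "Mh N i j = (hN N / 4) * (if i = j then 2 else if i = j + 1 \<or> j = i + 1 then 1 else 0)"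

definition Lh :: "(real \<Rightarrow> real) \<Rightarrow> nat \<Rightarrow> nat \<Rightarrow> nat \<Rightarrow> real" where
  "Lh a N i j = hN N * (if i = j then a (real i * hN N) else 0)"

definition mv :: "(nat \<Rightarrow> nat \<Rightarrow> real) \<Rightarrow> nat \<Rightarrow> (nat \<Rightarrow> complex) \<Rightarrow> nat \<Rightarrow> complex" where
  "mv A N U i = (\<Sum>j = 1..N. complex_of_real (A i j) * U j)"

definition ip :: "nat \<Rightarrow> (nat \<Rightarrow> complex) \<Rightarrow> (nat \<Rightarrow> complex) \<Rightarrow> complex" where
  "ip N U W = (\<Sum>j = 1..N. U j * cnj (W j))"

definition norm1_sq :: "(real \<Rightarrow> real) \<Rightarrow> nat \<Rightarrow> (nat \<Rightarrow> complex) \<Rightarrow> real" where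
  "norm1_sq a N U = Re (ip N (\<lambda>i. mv (Kh N) N U i + mv (Lh a N) N U i) U)"

definition normM_sq :: "nat \<Rightarrow> (nat \<Rightarrow> complex) \<Rightarrow> real" where
  "normM_sq N U = Re (ip N (mv (Mh N) N U) U)"

definition normM :: "nat \<Rightarrow> (nat \<Rightarrow> complex) \<Rightarrow> real" where
  "normM N U = sqrt (normM_sq N U)"

definition is_sol ::
  "(real \<Rightarrow> real) \<Rightarrow> nat \<Rightarrow> real \<Rightarrow> (real \<Rightarrow> complex) \<Rightarrow> (nat \<Rightarrow> complex)
   \<Rightarrow> (nat \<Rightarrow> real \<Rightarrow> complex) \<Rightarrow> (nat \<Rightarrow> real \<Rightarrow> complex) \<Rightarrow> (nat \<Rightarrow> real \<Rightarrow> complex) \<Rightarrow> bool" where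
  "is_sol a N T f F V V' V'' \<longleftrightarrow>
     (\<forall>j\<in>{1..N}. \<forall>t\<in>{0..T}.
        (V j has_vector_derivative V' j t) (at t within {0..T}) \<and>
        (V' j has_vector_derivative V'' j t) (at t within {0..T})) \<and>
     (\<forall>t\<in>{0..T}. \<forall>i\<in>{1..N}.
        mv (Mh N) N (\<lambda>j. V'' j t) i + mv (Kh N) N (\<lambda>j. V j t) i + mv (Lh a N) N (\<lambda>j. V j t) i
        = f t * mv (Mh N) N F i)"

definition H1 :: "real \<Rightarrow> (real \<Rightarrow> real) \<Rightarrow> bool" where
  "H1 T lam \<longleftrightarrow> (\<exists>g. g absolutely_integrable_on {0..T} \<and> (\<lambda>t. (g t)\<^sup>2) integrable_on {0..T} \<and>
      (\<forall>t\<in>{0..T}. (g has_integral (lam t - lam 0)) {0..t}))"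

definition unif_obs_time :: "(real \<Rightarrow> real) \<Rightarrow> real \<Rightarrow> bool" where
  "unif_obs_time a T0 \<longleftrightarrow> T0 > 0 \<and> (\<exists>\<kappa>0>0. \<forall>N\<ge>1. \<forall>T>T0. \<forall>U U' U''.
      is_sol a N T (\<lambda>_. 0) (\<lambda>_. 0) U U' U'' \<longrightarrow>
      integral {0..T} (\<lambda>t. (cmod (U 1 t / hN N))\<^sup>2 + (cmod (U' 1 t / 2))\<^sup>2)
        \<ge> \<kappa>0 * (norm1_sq a N (\<lambda>j. U j 0) + (normM N (\<lambda>j. U' j 0))\<^sup>2))"

end

theory Submission
  imports Defs
begin

text \<open>Let \<open>F\<close> be the difference of the two sources and \<open>V\<close> the solution with source
  \<open>\<lambda>(t) M\<^sub>h F\<close> and zero data. Differentiating the equation once, \<open>V'\<close> solves the system with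
  source \<open>\<lambda>'(t) M\<^sub>h F\<close> and data \<open>(0, \<lambda>(0) F)\<close>, so by Duhamel's formula
  \<open>V' = \<lambda>(0) \<Phi> + \<lambda>' * \<Phi>\<close>, where \<open>\<Phi>\<close> is the free solution with \<open>\<Phi>(0) = 0\<close>, \<open>\<Phi>'(0) = F\<close>.
  Hence the observation of \<open>V\<close> is the image of the observation of \<open>\<Phi>\<close> under the Volterra
  operator \<open>\<phi> \<mapsto> \<lambda>(0) \<phi> + \<lambda>' * \<phi>\<close>, whose inverse is bounded on \<open>L\<^sup>2(0,T)\<close> by Gronwall's lemma,
  with a constant depending only on \<open>\<lambda>(0)\<close>, \<open>\<parallel>\<lambda>'\<parallel>\<^sub>L\<^sub>2\<close> and \<open>T\<close>. The uniform observability
  inequality for \<open>\<Phi>\<close>, whose energy is \<open>\<parallel>F\<parallel>\<^sub>M\<^sup>2\<close>, then gives a bound independent of \<open>h\<close>.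
  The free solution \<open>\<Phi>\<close> is a power series, \<open>M\<^sub>h\<close> having an explicit inverse, and Duhamel's
  formula holds by uniqueness for the semi-discrete system (an energy estimate).\<close>

lemma mv_cong: "(\<And>j. j \<in> {1..N} \<Longrightarrow> x j = y j) \<Longrightarrow> mv A N x i = mv A N y i"
  unfolding mv_def by (auto intro!: sum.cong)

lemma mv_add: "mv A N (\<lambda>j. x j + y j) i = mv A N x i + mv A N y i"
  unfolding mv_def by (simp add: sum.distrib algebra_simps)

lemma mv_diff: "mv A N (\<lambda>j. x j - y j) i = mv A N x i - mv A N y i"
  unfolding mv_def by (simp add: sum_subtractf algebra_simps)

lemma mv_mult: "mv A N (\<lambda>j. c * x j) i = c * mv A N x i"
  unfolding mv_def by (simp add: sum_distrib_left algebra_simps)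

lemma mv_scaleR: "mv A N (\<lambda>j. r *\<^sub>R x j) i = r *\<^sub>R mv A N x i"
  unfolding mv_def by (simp add: scaleR_sum_right)

lemma mv_uminus: "mv A N (\<lambda>j. - x j) i = - mv A N x i"
  unfolding mv_def by (simp add: sum_negf)

lemma mv_zero: "mv A N (\<lambda>j. 0) i = 0"
  unfolding mv_def by simp

lemma mv_mv: "mv A N (mv B N x) i = mv (\<lambda>i k. \<Sum>j=1..N. A i j * B j k) N x i"
  unfolding mv_def of_real_sum sum_distrib_left sum_distrib_right
  by (subst sum.swap) (simp add: mult.assoc)

lemma has_integral_mv:
  assumes "\<And>j. j \<in> {1..N} \<Longrightarrow> (f j has_integral I j) S"
  shows "((\<lambda>x. mv A N (\<lambda>j. f j x) i) has_integral mv A N I i) S"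
  unfolding mv_def by (intro has_integral_sum has_integral_mult_right assms) auto

definition l1_norm :: "nat \<Rightarrow> (nat \<Rightarrow> complex) \<Rightarrow> real" where
  "l1_norm N x = (\<Sum>j=1..N. cmod (x j))"

definition entry_l1_norm :: "nat \<Rightarrow> (nat \<Rightarrow> nat \<Rightarrow> real) \<Rightarrow> real" where
  "entry_l1_norm N A = (\<Sum>i=1..N. \<Sum>j=1..N. \<bar>A i j\<bar>)"

lemma l1_norm_nonneg: "l1_norm N x \<ge> 0"
  unfolding l1_norm_def by (simp add: sum_nonneg)

lemma entry_l1_norm_nonneg: "entry_l1_norm N A \<ge> 0"
  unfolding entry_l1_norm_def by (simp add: sum_nonneg)

lemma norm_le_l1_norm: "j \<in> {1..N} \<Longrightarrow> cmod (x j) \<le> l1_norm N x"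
  unfolding l1_norm_def by (rule member_le_sum) auto

lemma l1_norm_square_le: "(l1_norm N x)\<^sup>2 \<le> real N * (\<Sum>j=1..N. (cmod (x j))\<^sup>2)"
  using sum_squared_le_sum_of_squares[of "\<lambda>j. cmod (x j)" "{1..N}"]
  by (simp add: l1_norm_def mult.commute)

lemma norm_mv_le:
  assumes i: "i \<in> {1..N}"
  shows "cmod (mv A N x i) \<le> entry_l1_norm N A * l1_norm N x"
proof -
  have "\<bar>A i j\<bar> \<le> entry_l1_norm N A" if j: "j \<in> {1..N}" for j
  proof -
    have "\<bar>A i j\<bar> \<le> (\<Sum>j=1..N. \<bar>A i j\<bar>)" by (rule member_le_sum[OF j]) auto
    also have "\<dots> \<le> entry_l1_norm N A"
      unfolding entry_l1_norm_def by (rule member_le_sum[OF i]) (auto intro: sum_nonneg)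
    finally show ?thesis .
  qed
  then have "(\<Sum>j=1..N. cmod (complex_of_real (A i j) * x j)) \<le> (\<Sum>j=1..N. entry_l1_norm N A * cmod (x j))"
    by (intro sum_mono) (auto simp: norm_mult intro!: mult_right_mono)
  moreover have "cmod (mv A N x i) \<le> (\<Sum>j=1..N. cmod (complex_of_real (A i j) * x j))"
    unfolding mv_def by (rule norm_sum)
  ultimately show ?thesis
    unfolding l1_norm_def by (simp add: sum_distrib_left)
qed

lemma l1_norm_mv_le: "l1_norm N (mv A N x) \<le> real N * entry_l1_norm N A * l1_norm N x"
proof -
  have "l1_norm N (mv A N x) \<le> (\<Sum>i=1..N. entry_l1_norm N A * l1_norm N x)"
    unfolding l1_norm_def[of N "mv A N x"] by (intro sum_mono norm_mv_le)
  then show ?thesis by simp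
qed

section \<open>The inverse of the mass matrix\<close>

lemma hN_pos: "hN N > 0"
  unfolding hN_def by simp

lemma sum_Mh_mult:
  fixes X :: "nat \<Rightarrow> real"
  assumes i: "i \<in> {1..N}" and "X 0 = 0" and "X (N + 1) = 0"
  shows "(\<Sum>j=1..N. Mh N i j * X j) = hN N / 4 * (X (i - 1) + 2 * X i + X (i + 1))"
proof -
  have e: "Mh N i j * X j = hN N / 4 * ((if j = i then 2 * X j else 0) + (if j = i + 1 then X j else 0)
      + (if j = i - 1 then X j else 0))" for j
    unfolding Mh_def using i by auto
  have "(\<Sum>j=1..N. Mh N i j * X j) = hN N / 4 * ((\<Sum>j=1..N. if j = i then 2 * X j else 0)
      + (\<Sum>j=1..N. if j = i + 1 then X j else 0) + (\<Sum>j=1..N. if j = i - 1 then X j else 0))"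
    unfolding e sum_distrib_left[symmetric] sum.distrib by simp
  also have "\<dots> = hN N / 4 * (X (i - 1) + 2 * X i + X (i + 1))"
    using assms by (cases "i = N") (auto simp: sum.delta')
  finally show ?thesis .
qed

text \<open>The inverse of \<open>tridiag(1,2,1) = 4 M\<^sub>h / h\<close>: the Green's function
  \<open>min(j,k) (N+1-max(j,k)) / (N+1)\<close> of the discrete Dirichlet Laplacian \<open>tridiag(-1,2,-1)\<close>,
  conjugated by \<open>diag((-1)\<^sup>j)\<close>.\<close>

definition alt_green :: "nat \<Rightarrow> nat \<Rightarrow> nat \<Rightarrow> real" where
  "alt_green N j k = (-1) ^ (j + k) * real (min j k) * (real N + 1 - real (max j k)) / (real N + 1)"

lemma alt_green_sym: "alt_green N j k = alt_green N k j"
  unfolding alt_green_def by (simp add: min.commute max.commute add.commute)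

lemma alt_green_stencil:
  assumes i: "i \<in> {1..N}" and k: "k \<in> {1..N}"
  shows "alt_green N (i - 1) k + 2 * alt_green N i k + alt_green N (i + 1) k = (if i = k then 1 else 0)"
proof -
  obtain m where m: "i = Suc m" using i by (cases i) auto
  define s where "s = (-1::real) ^ (i + k)"
  have s1: "(-1::real) ^ (m + k) = - s" and s2: "(-1::real) ^ (Suc (Suc m) + k) = - s"
    unfolding s_def m by simp_all
  have G: "alt_green N m k + 2 * alt_green N i k + alt_green N (Suc i) k
    = (- s * real (min m k) * (real N + 1 - real (max m k)) + 2 * s * real (min i k) * (real N + 1 - real (max i k))
       - s * real (min (Suc i) k) * (real N + 1 - real (max (Suc i) k))) / (real N + 1)"
    unfolding alt_green_def s1 s2[folded m] s_def[symmetric] by (simp add: add_divide_distrib diff_divide_distrib)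
  consider "i < k" | "i = k" | "k < i" by linarith
  then show ?thesis
  proof cases
    case 1
    then show ?thesis using G m by (simp add: min_def max_def algebra_simps)
  next
    case 2
    have "s = 1" unfolding s_def 2 by (simp add: mult_2[symmetric])
    moreover have "min m k = m" "max m k = k" "min i k = k" "max i k = k"
      "min (Suc i) k = k" "max (Suc i) k = Suc k" "real m = real k - 1"
      using m 2 by auto
    ultimately have "alt_green N m k + 2 * alt_green N i k + alt_green N (Suc i) k
      = (- (real k - 1) * (real N + 1 - real k) + 2 * real k * (real N + 1 - real k)
         - real k * (real N - real k)) / (real N + 1)"
      using G by simp
    also have "\<dots> = 1"
      by (simp add: field_simps)
    finally show ?thesis using m 2 by simp
  next
    case 3
    then have "min m k = k" "max m k = m" "min i k = k" "max i k = i"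
      "min (Suc i) k = k" "max (Suc i) k = Suc i"
      using m by auto
    then show ?thesis using G m 3 by (simp add: algebra_simps)
  qed
qed

definition Mh_inv :: "nat \<Rightarrow> nat \<Rightarrow> nat \<Rightarrow> real" where
  "Mh_inv N j k = 4 / hN N * alt_green N j k"

lemma Mh_Mh_inv:
  assumes i: "i \<in> {1..N}" and k: "k \<in> {1..N}"
  shows "(\<Sum>j=1..N. Mh N i j * Mh_inv N j k) = (if i = k then 1 else 0)"
proof -
  have "Mh_inv N 0 k = 0" "Mh_inv N (N + 1) k = 0"
    unfolding Mh_inv_def alt_green_def using k by (simp_all add: max_def)
  then have "(\<Sum>j=1..N. Mh N i j * Mh_inv N j k)
      = hN N / 4 * (Mh_inv N (i - 1) k + 2 * Mh_inv N i k + Mh_inv N (i + 1) k)"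
    by (rule sum_Mh_mult[OF i])
  also have "\<dots> = alt_green N (i - 1) k + 2 * alt_green N i k + alt_green N (i + 1) k"
    unfolding Mh_inv_def using hN_pos[of N] by (simp add: field_simps)
  also have "\<dots> = (if i = k then 1 else 0)"
    by (rule alt_green_stencil[OF i k])
  finally show ?thesis .
qed

lemma Mh_inv_Mh:
  assumes i: "i \<in> {1..N}" and k: "k \<in> {1..N}"
  shows "(\<Sum>j=1..N. Mh_inv N i j * Mh N j k) = (if i = k then 1 else 0)"
proof -
  have "Mh_inv N i j * Mh N j k = Mh N k j * Mh_inv N j i" for j
    unfolding Mh_inv_def Mh_def by (subst alt_green_sym) auto
  then show ?thesis using Mh_Mh_inv[OF k i] by auto
qed

lemma mv_identity:
  assumes "\<And>k. k \<in> {1..N} \<Longrightarrow> (\<Sum>j=1..N. A i j * B j k) = (if i = k then 1 else 0)"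
    and i: "i \<in> {1..N}"
  shows "mv A N (mv B N x) i = x i"
proof -
  have "mv (\<lambda>i k. \<Sum>j=1..N. A i j * B j k) N x i = (\<Sum>k=1..N. if i = k then x k else 0)"
    unfolding mv_def using assms by (intro sum.cong) auto
  then show ?thesis unfolding mv_mv using i by simp
qed

lemma mv_Mh_mv_Mh_inv: "i \<in> {1..N} \<Longrightarrow> mv (Mh N) N (mv (Mh_inv N) N x) i = x i"
  by (rule mv_identity[OF Mh_Mh_inv])

lemma mv_Mh_inv_mv_Mh: "i \<in> {1..N} \<Longrightarrow> mv (Mh_inv N) N (mv (Mh N) N x) i = x i"
  by (rule mv_identity[OF Mh_inv_Mh])

section \<open>Free solutions as power series\<close>

definition Ah :: "(real \<Rightarrow> real) \<Rightarrow> nat \<Rightarrow> nat \<Rightarrow> nat \<Rightarrow> real" where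
  "Ah a N i j = Kh N i j + Lh a N i j"

definition Bh :: "(real \<Rightarrow> real) \<Rightarrow> nat \<Rightarrow> nat \<Rightarrow> nat \<Rightarrow> real" where
  "Bh a N i k = - (\<Sum>j=1..N. Mh_inv N i j * Ah a N j k)"

lemma mv_Ah: "mv (Ah a N) N x i = mv (Kh N) N x i + mv (Lh a N) N x i"
  unfolding Ah_def mv_def by (simp add: sum.distrib algebra_simps)

lemma mv_Bh: "mv (Bh a N) N x i = - mv (Mh_inv N) N (mv (Ah a N) N x) i"
  unfolding Bh_def mv_mv by (simp add: mv_def sum_negf)

lemma mv_Mh_mv_Bh:
  assumes "i \<in> {1..N}"
  shows "mv (Mh N) N (mv (Bh a N) N x) i = - mv (Ah a N) N x i"
proof -
  have "mv (Bh a N) N x = (\<lambda>j. - mv (Mh_inv N) N (mv (Ah a N) N x) j)"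
    by (rule ext) (rule mv_Bh)
  then show ?thesis
    using assms by (simp add: mv_uminus mv_Mh_mv_Mh_inv)
qed

lemma eq_mv_Bh_if_Mh:
  assumes "\<And>i. i \<in> {1..N} \<Longrightarrow> mv (Mh N) N y i = - mv (Ah a N) N x i" and j: "j \<in> {1..N}"
  shows "y j = mv (Bh a N) N x j"
proof -
  have "y j = mv (Mh_inv N) N (mv (Mh N) N y) j"
    by (rule mv_Mh_inv_mv_Mh[OF j, symmetric])
  also have "\<dots> = mv (Mh_inv N) N (\<lambda>i. - mv (Ah a N) N x i) j"
    by (rule mv_cong) (rule assms(1))
  finally show ?thesis
    unfolding mv_uminus mv_Bh .
qed

definition egf :: "(nat \<Rightarrow> complex) \<Rightarrow> real \<Rightarrow> complex" where
  "egf c t = (\<Sum>n. c n / of_nat (fact n) * complex_of_real t ^ n)"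

definition geom_bounded :: "(nat \<Rightarrow> complex) \<Rightarrow> bool" where
  "geom_bounded c \<longleftrightarrow> (\<exists>C R. R \<ge> 0 \<and> (\<forall>n. cmod (c n) \<le> C * R ^ n))"

lemma summable_egf:
  assumes "geom_bounded c"
  shows "summable (\<lambda>n. c n / of_nat (fact n) * z ^ n)"
proof -
  obtain C R where R: "R \<ge> 0" and c: "\<And>n. cmod (c n) \<le> C * R ^ n"
    using assms unfolding geom_bounded_def by blast
  have "norm (c n / of_nat (fact n) * z ^ n) \<le> C * (inverse (fact n) * (R * cmod z) ^ n)" for n
  proof -
    have "norm (c n / of_nat (fact n) * z ^ n) = cmod (c n) / fact n * cmod z ^ n"
      by (simp add: norm_mult norm_divide norm_power)
    also have "\<dots> \<le> C * R ^ n / fact n * cmod z ^ n"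
      by (intro mult_right_mono divide_right_mono c) auto
    finally show ?thesis
      by (simp add: power_mult_distrib field_simps)
  qed
  moreover have "summable (\<lambda>n. C * (inverse (fact n) * (R * cmod z) ^ n))"
    by (intro summable_mult summable_exp)
  ultimately show ?thesis
    by (rule summable_comparison_test'[rotated])
qed

lemma egf_has_vector_derivative:
  assumes "geom_bounded c"
  shows "(egf c has_vector_derivative egf (\<lambda>n. c (Suc n)) t) (at t within S)"
proof -
  let ?g = "\<lambda>z. \<Sum>n. c n / of_nat (fact n) * z ^ n"
  have "diffs (\<lambda>n. c n / of_nat (fact n)) = (\<lambda>n. c (Suc n) / of_nat (fact n))"
    unfolding diffs_def by (metis of_nat_fact fact_cancel times_divide_eq_right)
  then have "(?g has_field_derivative (\<Sum>n. c (Suc n) / of_nat (fact n) * z ^ n)) (at z)" for z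
    using termdiffs_strong_converges_everywhere[OF summable_egf[OF assms]] by metis
  moreover have "(complex_of_real has_vector_derivative 1) (at t)"
    using has_vector_derivative_of_real[OF DERIV_ident[of "at t"]] by simp
  ultimately have "((?g \<circ> complex_of_real) has_vector_derivative egf (\<lambda>n. c (Suc n)) t) (at t)"
    using field_vector_diff_chain_at unfolding egf_def by fastforce
  then show ?thesis
    unfolding egf_def[abs_def] comp_def by (rule has_vector_derivative_at_within)
qed

lemma continuous_on_egf: "geom_bounded c \<Longrightarrow> continuous_on S (egf c)"
  using egf_has_vector_derivative
  by (meson continuous_at_imp_continuous_on has_vector_derivative_continuous)

lemma egf_at_0: "egf c 0 = c 0"
  unfolding egf_def of_real_0 powser_zero by simp

lemma egf_mv:
  assumes "\<And>l. l \<in> {1..N} \<Longrightarrow> geom_bounded (c l)"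
  shows "egf (\<lambda>n. mv A N (\<lambda>l. c l n) i) t = mv A N (\<lambda>l. egf (c l) t) i"
proof -
  have "egf (\<lambda>n. mv A N (\<lambda>l. c l n) i) t
      = (\<Sum>n. \<Sum>l=1..N. complex_of_real (A i l) * (c l n / of_nat (fact n) * complex_of_real t ^ n))"
    unfolding egf_def mv_def by (simp add: sum_divide_distrib sum_distrib_right mult.assoc)
  also have "\<dots> = (\<Sum>l=1..N. \<Sum>n. complex_of_real (A i l) * (c l n / of_nat (fact n) * complex_of_real t ^ n))"
    by (rule suminf_sum) (intro summable_mult summable_egf assms)
  also have "\<dots> = mv A N (\<lambda>l. egf (c l) t) i"
    unfolding mv_def egf_def
    by (intro sum.cong refl suminf_mult summable_egf assms) auto
  finally show ?thesis .
qed

fun free_coeff :: "(real \<Rightarrow> real) \<Rightarrow> nat \<Rightarrow> (nat \<Rightarrow> complex) \<Rightarrow> nat \<Rightarrow> nat \<Rightarrow> complex" where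
  "free_coeff a N F 0 = (\<lambda>_. 0)"
| "free_coeff a N F (Suc 0) = F"
| "free_coeff a N F (Suc (Suc n)) = mv (Bh a N) N (free_coeff a N F n)"

lemma l1_norm_free_coeff_le:
  "l1_norm N (free_coeff a N F n) \<le> l1_norm N F * (1 + real N * entry_l1_norm N (Bh a N)) ^ n"
proof (induction a N F n rule: free_coeff.induct)
  case (1 a N F)
  then show ?case using l1_norm_nonneg[of N F] by (simp add: l1_norm_def)
next
  case (2 a N F)
  have "1 \<le> 1 + real N * entry_l1_norm N (Bh a N)"
    using entry_l1_norm_nonneg[of N "Bh a N"] by simp
  then show ?case using l1_norm_nonneg[of N F] by (simp add: mult_le_cancel_left1)
next
  case (3 a N F n)
  define R where "R = 1 + real N * entry_l1_norm N (Bh a N)"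
  have R: "real N * entry_l1_norm N (Bh a N) \<le> R" "1 \<le> R"
    unfolding R_def using entry_l1_norm_nonneg[of N "Bh a N"] by simp_all
  have "l1_norm N (free_coeff a N F (Suc (Suc n))) \<le> real N * entry_l1_norm N (Bh a N) * l1_norm N (free_coeff a N F n)"
    using l1_norm_mv_le by simp
  also have "\<dots> \<le> R * (l1_norm N F * R ^ n)"
    using R "3.IH"[folded R_def] by (intro mult_mono) (auto simp: l1_norm_nonneg)
  also have "\<dots> \<le> R * R * (l1_norm N F * R ^ n)"
    using R by (intro mult_right_mono) (auto simp: l1_norm_nonneg)
  finally show ?case unfolding R_def by (simp add: power2_eq_square mult_ac)
qed

lemma geom_bounded_free_coeff:
  assumes j: "j \<in> {1..N}"
  shows "geom_bounded (\<lambda>n. free_coeff a N F (n + k) j)"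
proof -
  define R where "R = 1 + real N * entry_l1_norm N (Bh a N)"
  have "cmod (free_coeff a N F (n + k) j) \<le> (l1_norm N F * R ^ k) * R ^ n" for n
    using norm_le_l1_norm[OF j] l1_norm_free_coeff_le[of N a F "n + k"] order_trans
    unfolding R_def by (fastforce simp: power_add mult_ac)
  moreover have "R \<ge> 0" unfolding R_def using entry_l1_norm_nonneg[of N "Bh a N"] by simp
  ultimately show ?thesis
    unfolding geom_bounded_def by blast
qed

text \<open>\<open>free_sol a N F k\<close> is the \<open>k\<close>-th time derivative of the solution of
  \<open>M\<^sub>h U'' + K\<^sub>h U + L\<^sub>h U = 0\<close>, \<open>U(0) = 0\<close>, \<open>U'(0) = F\<close>.\<close>

definition free_sol :: "(real \<Rightarrow> real) \<Rightarrow> nat \<Rightarrow> (nat \<Rightarrow> complex) \<Rightarrow> nat \<Rightarrow> nat \<Rightarrow> real \<Rightarrow> complex" where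
  "free_sol a N F k j t = egf (\<lambda>n. free_coeff a N F (n + k) j) t"

lemma free_sol_has_vector_derivative:
  "j \<in> {1..N} \<Longrightarrow> (free_sol a N F k j has_vector_derivative free_sol a N F (Suc k) j t) (at t within S)"
  unfolding free_sol_def[abs_def] using egf_has_vector_derivative[OF geom_bounded_free_coeff] by simp

lemma continuous_on_free_sol: "j \<in> {1..N} \<Longrightarrow> continuous_on S (free_sol a N F k j)"
  unfolding free_sol_def[abs_def] by (rule continuous_on_egf[OF geom_bounded_free_coeff])

lemma free_sol_initial: "free_sol a N F 0 j 0 = 0" "free_sol a N F 1 j 0 = F j"
  unfolding free_sol_def egf_at_0 by simp_all

lemma free_sol_Suc_Suc:
  "free_sol a N F (Suc (Suc k)) j t = mv (Bh a N) N (\<lambda>l. free_sol a N F k l t) j"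
proof -
  have "free_sol a N F (Suc (Suc k)) j t = egf (\<lambda>n. mv (Bh a N) N (\<lambda>l. free_coeff a N F (n + k) l) j) t"
    unfolding free_sol_def by simp
  also have "\<dots> = mv (Bh a N) N (\<lambda>l. free_sol a N F k l t) j"
    unfolding free_sol_def by (rule egf_mv) (rule geom_bounded_free_coeff)
  finally show ?thesis .
qed

lemma free_sol_ode:
  assumes "i \<in> {1..N}"
  shows "mv (Mh N) N (\<lambda>j. free_sol a N F (Suc (Suc k)) j t) i + mv (Kh N) N (\<lambda>j. free_sol a N F k j t) i
         + mv (Lh a N) N (\<lambda>j. free_sol a N F k j t) i = 0"
  unfolding free_sol_Suc_Suc mv_Mh_mv_Bh[OF assms] mv_Ah by simp

lemma is_sol_free_sol: "is_sol a N T (\<lambda>_. 0) (\<lambda>_. 0) (free_sol a N F 0) (free_sol a N F 1) (free_sol a N F 2)"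
  unfolding is_sol_def numeral_2_eq_2 One_nat_def
  by (simp add: free_sol_has_vector_derivative free_sol_ode[unfolded One_nat_def] mv_zero)

lemma continuous_on_reflect_shift:
  fixes f :: "real \<Rightarrow> 'a::topological_space" and c :: real
  shows "continuous_on UNIV f \<Longrightarrow> continuous_on S (\<lambda>s. f (c - s))"
  by (rule continuous_on_compose2[of UNIV f]) (auto intro!: continuous_intros)

lemma bounded_on_Icc:
  fixes f :: "real \<Rightarrow> 'a::real_normed_vector"
  assumes "continuous_on {a..b} f"
  obtains K where "\<And>x. x \<in> {a..b} \<Longrightarrow> norm (f x) \<le> K"
  using compact_imp_bounded[OF compact_continuous_image[OF assms compact_Icc]]
  unfolding bounded_iff by blast

lemma norm_diff_le_of_vector_derivative:
  fixes f :: "real \<Rightarrow> 'a::real_normed_vector"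
  assumes f': "\<And>x. x \<in> {a..b} \<Longrightarrow> (f has_vector_derivative f' x) (at x within {a..b})"
    and B: "\<And>x. x \<in> {a..b} \<Longrightarrow> norm (f' x) \<le> B"
    and "x \<in> {a..b}" "y \<in> {a..b}"
  shows "norm (f x - f y) \<le> B * \<bar>x - y\<bar>"
proof -
  have "onorm (\<lambda>h::real. h) = 1"
    by (rule onorm_id)
  then have "onorm (\<lambda>h. h *\<^sub>R f' x) \<le> B" if "x \<in> {a..b}" for x
    using B[OF that] onorm_scaleR_left[OF bounded_linear_ident, of "f' x"] by simp
  then have "norm (f x - f y) \<le> B * norm (x - y)"
    using f' assms(3,4) unfolding has_vector_derivative_def
    by (intro differentiable_bound[of "{a..b}" f "\<lambda>x h. h *\<^sub>R f' x"]) auto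
  then show ?thesis by simp
qed

lemma norm_taylor1_le:
  fixes f :: "real \<Rightarrow> 'a::real_normed_vector"
  assumes f': "\<And>x. x \<in> {a..b} \<Longrightarrow> (f has_vector_derivative f' x) (at x within {a..b})"
    and f'': "\<And>x. x \<in> {a..b} \<Longrightarrow> (f' has_vector_derivative f'' x) (at x within {a..b})"
    and K: "\<And>x. x \<in> {a..b} \<Longrightarrow> norm (f'' x) \<le> K"
    and x: "x \<in> {a..b}" and y: "y \<in> {a..b}"
  shows "norm (f y - f x - (y - x) *\<^sub>R f' x) \<le> K * (y - x)\<^sup>2"
proof -
  have seg: "closed_segment x y \<subseteq> {a..b}"
    using x y by (auto simp: closed_segment_eq_real_ivl split: if_splits)
  have "norm (f' z - f' x) \<le> K * \<bar>y - x\<bar>" if "z \<in> closed_segment x y" for z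
  proof -
    have "norm (f' z - f' x) \<le> K * \<bar>z - x\<bar>"
      using seg that x by (intro norm_diff_le_of_vector_derivative[OF f'' K]) auto
    also have "\<dots> \<le> K * \<bar>y - x\<bar>"
      using that K[OF x] by (intro mult_left_mono)
        (auto simp: closed_segment_eq_real_ivl split: if_splits intro: order_trans[OF norm_ge_zero])
    finally show ?thesis .
  qed
  then have "norm (f y - f x - (y - x) *\<^sub>R f' x) \<le> norm (y - x) * (K * \<bar>y - x\<bar>)"
    using seg by (intro vector_differentiable_bound_linearization[of "closed_segment x y"])
      (auto intro: has_vector_derivative_within_subset[OF f'])
  then show ?thesis
    by (simp add: power2_eq_square mult_ac)
qed

lemma has_vector_derivative_of_remainder_le:
  fixes f :: "real \<Rightarrow> 'a::real_normed_vector"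
  assumes R: "\<And>y. y \<in> S \<Longrightarrow> norm (f y - f t - (y - t) *\<^sub>R f') \<le> \<bar>y - t\<bar> * \<omega> y"
    and \<omega>: "(\<omega> \<longlongrightarrow> 0) (at t within S)"
  shows "(f has_vector_derivative f') (at t within S)"
proof -
  have "norm ((1 / norm (y - t)) *\<^sub>R (f y - (f t + (y - t) *\<^sub>R f'))) \<le> \<omega> y"
    if "y \<in> S" "y \<noteq> t" for y
  proof -
    have "norm (f y - (f t + (y - t) *\<^sub>R f')) \<le> \<bar>y - t\<bar> * \<omega> y"
      using R[OF that(1)] by (simp add: diff_diff_eq)
    then show ?thesis
      using that(2) by (simp add: pos_divide_le_eq mult.commute)
  qed
  then have "\<forall>\<^sub>F y in at t within S. norm ((1 / norm (y - t)) *\<^sub>R (f y - (f t + (y - t) *\<^sub>R f'))) \<le> \<omega> y"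
    unfolding eventually_at_filter by (auto intro: always_eventually)
  then have "((\<lambda>y. (1 / norm (y - t)) *\<^sub>R (f y - (f t + (y - t) *\<^sub>R f'))) \<longlongrightarrow> 0) (at t within S)"
    by (rule Lim_null_comparison[OF _ \<omega>])
  then show ?thesis
    unfolding has_vector_derivative_def has_derivative_within
    using bounded_linear_scaleR_left by blast
qed

lemma norm_power2_has_real_derivative:
  fixes f :: "real \<Rightarrow> 'a::real_inner"
  assumes "(f has_vector_derivative f') (at t within S)"
  shows "((\<lambda>t. (norm (f t))\<^sup>2) has_real_derivative 2 * inner (f t) f') (at t within S)"
  unfolding power2_norm_eq_inner has_field_derivative_def
  using has_derivative_inner[OF assms[unfolded has_vector_derivative_def] assms[unfolded has_vector_derivative_def]]
  by (rule has_derivative_eq_rhs) (auto simp: fun_eq_iff inner_commute)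

lemma two_inner_le: "2 * inner x y \<le> (norm x)\<^sup>2 + (norm y)\<^sup>2"
proof -
  have "0 \<le> inner (x - y) (x - y)" by simp
  then show ?thesis by (simp add: inner_diff power2_norm_eq_inner inner_commute)
qed

lemma gronwall_deriv:
  fixes E A e a :: "real \<Rightarrow> real"
  assumes T: "0 \<le> T" and \<beta>: "0 \<le> \<beta>"
    and E: "\<And>x. x \<in> {0..T} \<Longrightarrow> (E has_real_derivative e x) (at x within {0..T})"
    and A: "\<And>x. x \<in> {0..T} \<Longrightarrow> (A has_real_derivative a x) (at x within {0..T})"
    and growth: "\<And>x. x \<in> {0..T} \<Longrightarrow> e x \<le> a x + \<beta> * E x"
    and a_nonneg: "\<And>x. x \<in> {0..T} \<Longrightarrow> 0 \<le> a x"
    and init: "E 0 \<le> A 0"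
  shows "E T \<le> exp (\<beta> * T) * A T"
proof -
  define f where "f x = exp (- \<beta> * x) * E x - A x" for x
  have "continuous_on {0..T} E" "continuous_on {0..T} A"
    using E A by (meson DERIV_continuous continuous_on_eq_continuous_within)+
  then have cont: "continuous_on {0..T} f"
    unfolding f_def by (intro continuous_intros)
  have "f T \<le> f 0"
  proof (rule DERIV_nonpos_imp_decreasing_open[OF T _ cont])
    fix x assume x: "0 < x" "x < T"
    then have "x \<in> {0..T}" and at: "at x within {0..T} = at x"
      using at_within_Icc_at[of 0 x T] by auto
    have d: "(f has_real_derivative exp (- \<beta> * x) * (e x - \<beta> * E x) - a x) (at x)"
      unfolding f_def using E[OF \<open>x \<in> {0..T}\<close>] A[OF \<open>x \<in> {0..T}\<close>] unfolding at
      by (auto intro!: derivative_eq_intros simp: algebra_simps)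
    have "exp (- \<beta> * x) * (e x - \<beta> * E x) \<le> exp (- \<beta> * x) * a x"
      using growth[OF \<open>x \<in> {0..T}\<close>] by (intro mult_left_mono) auto
    moreover have "exp (- \<beta> * x) * a x \<le> a x"
      using a_nonneg[OF \<open>x \<in> {0..T}\<close>] \<beta> x by (intro mult_left_le_one_le) auto
    ultimately have "exp (- \<beta> * x) * (e x - \<beta> * E x) - a x \<le> 0"
      by linarith
    with d show "\<exists>y. (f has_real_derivative y) (at x) \<and> y \<le> 0"
      by blast
  qed
  then have "exp (- \<beta> * T) * E T \<le> A T"
    using init unfolding f_def by simp
  then show ?thesis
    by (simp add: exp_minus field_simps)
qed

lemma le_sqrt_of_AM_GM:
  fixes x P Q :: real
  assumes P: "0 \<le> P" and Q: "0 \<le> Q" and AM_GM: "\<And>c. 0 < c \<Longrightarrow> 2 * x \<le> c * P + Q / c"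
  shows "x \<le> sqrt (P * Q)"
proof (cases "x \<le> 0")
  case True
  then show ?thesis using P Q by (meson order_trans real_sqrt_ge_zero mult_nonneg_nonneg)
next
  case False
  then have x: "0 < x" by simp
  show ?thesis
  proof (cases "P = 0")
    case True
    have "2 * x \<le> Q * x / (Q + 1)"
      using AM_GM[of "(Q + 1) / x"] True x Q by simp
    also have "\<dots> < 2 * x"
    proof -
      have "0 \<le> Q * x" "2 * x * (Q + 1) = Q * x + (Q * x + 2 * x)"
        using Q x by (simp_all add: algebra_simps)
      then have "Q * x < 2 * x * (Q + 1)"
        using x by linarith
      then show ?thesis
        using Q by (simp add: divide_less_eq)
    qed
    finally show ?thesis by simp
  next
    case False
    then have "0 < P" using P by simp
    then have "2 * x \<le> x + Q * P / x"
      using AM_GM[of "x / P"] x by simp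
    then have "x\<^sup>2 \<le> P * Q"
      using x by (simp add: field_simps power2_eq_square)
    then show ?thesis
      by (rule real_le_rsqrt)
  qed
qed

lemma integral_mult_le_sqrt:
  fixes f h :: "'a::euclidean_space \<Rightarrow> real"
  assumes fh: "(\<lambda>x. f x * h x) integrable_on S"
    and f2: "(\<lambda>x. (f x)\<^sup>2) integrable_on S" and h2: "(\<lambda>x. (h x)\<^sup>2) integrable_on S"
  shows "integral S (\<lambda>x. f x * h x) \<le> sqrt (integral S (\<lambda>x. (f x)\<^sup>2) * integral S (\<lambda>x. (h x)\<^sup>2))"
proof (rule le_sqrt_of_AM_GM)
  show "0 \<le> integral S (\<lambda>x. (f x)\<^sup>2)" "0 \<le> integral S (\<lambda>x. (h x)\<^sup>2)"
    by (simp_all add: integral_nonneg f2 h2)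
  fix c :: real assume c: "0 < c"
  have "2 * (f x * h x) \<le> c * (f x)\<^sup>2 + (h x)\<^sup>2 / c" for x
  proof -
    have "0 \<le> (c * f x - h x)\<^sup>2" by simp
    then have "2 * c * (f x * h x) \<le> c * (c * (f x)\<^sup>2 + (h x)\<^sup>2 / c)"
      using c by (simp add: power2_eq_square algebra_simps)
    then show ?thesis
      using c by (simp add: mult.assoc)
  qed
  moreover have "((\<lambda>x. 2 * (f x * h x)) has_integral 2 * integral S (\<lambda>x. f x * h x)) S"
    by (intro has_integral_mult_right integrable_integral fh)
  moreover have "((\<lambda>x. c * (f x)\<^sup>2 + (h x)\<^sup>2 / c) has_integral
      c * integral S (\<lambda>x. (f x)\<^sup>2) + integral S (\<lambda>x. (h x)\<^sup>2) / c) S"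
    by (intro has_integral_add has_integral_mult_right has_integral_divide integrable_integral f2 h2)
  ultimately show "2 * integral S (\<lambda>x. f x * h x) \<le> c * integral S (\<lambda>x. (f x)\<^sup>2) + integral S (\<lambda>x. (h x)\<^sup>2) / c"
    by (rule has_integral_le[rotated 2])
qed

lemma has_integral_reflect_Icc:
  fixes f :: "real \<Rightarrow> 'a::real_normed_vector"
  assumes "(f has_integral I) {0..t}"
  shows "((\<lambda>s. f (t - s)) has_integral I) {0..t}"
proof -
  have "((\<lambda>x. f (x + t)) has_integral I) {0 - t..t - t}"
    by (rule has_integral_shift_real_ivl[OF assms])
  then have "((\<lambda>x. f (- x + t)) has_integral I) {- 0..- (- t)}"
    by (subst has_integral_reflect_real) simp
  then show ?thesis
    by (simp add: algebra_simps)
qed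

section \<open>Uniqueness by an energy estimate\<close>

lemma is_sol_diff:
  assumes "is_sol a N T f F V V' V''" and "is_sol a N T f G W W' W''"
  shows "is_sol a N T f (\<lambda>j. F j - G j) (\<lambda>j t. V j t - W j t) (\<lambda>j t. V' j t - W' j t) (\<lambda>j t. V'' j t - W'' j t)"
  using assms unfolding is_sol_def mv_diff
  by (auto intro!: has_vector_derivative_diff simp: algebra_simps)

lemma is_sol_homogeneous_second_deriv:
  assumes "is_sol a N T f (\<lambda>_. 0) Y Y1 Y2" and "t \<in> {0..T}" and "j \<in> {1..N}"
  shows "Y2 j t = mv (Bh a N) N (\<lambda>k. Y k t) j"
proof (rule eq_mv_Bh_if_Mh[OF _ \<open>j \<in> {1..N}\<close>])
  fix i assume "i \<in> {1..N}"
  then have "mv (Mh N) N (\<lambda>k. Y2 k t) i + (mv (Kh N) N (\<lambda>k. Y k t) i + mv (Lh a N) N (\<lambda>k. Y k t) i) = 0"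
    using assms(1,2) unfolding is_sol_def by (simp add: mv_zero add.assoc)
  then show "mv (Mh N) N (\<lambda>k. Y2 k t) i = - mv (Ah a N) N (\<lambda>k. Y k t) i"
    unfolding mv_Ah eq_neg_iff_add_eq_0 .
qed

lemma energy_derivative_le:
  fixes Y Y1 Y2 :: "nat \<Rightarrow> complex"
  assumes "\<And>j. j \<in> {1..N} \<Longrightarrow> Y2 j = mv (Bh a N) N Y j"
  shows "(\<Sum>j=1..N. 2 * inner (Y j) (Y1 j) + 2 * inner (Y1 j) (Y2 j))
    \<le> (2 + (real N * entry_l1_norm N (Bh a N))\<^sup>2) * (\<Sum>j=1..N. (norm (Y j))\<^sup>2 + (norm (Y1 j))\<^sup>2)"
proof -
  define c where "c = entry_l1_norm N (Bh a N)"
  define P where "P = (\<Sum>j=1..N. (norm (Y j))\<^sup>2)"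
  define Q where "Q = (\<Sum>j=1..N. (norm (Y1 j))\<^sup>2)"
  have "P \<ge> 0" "Q \<ge> 0" unfolding P_def Q_def by (simp_all add: sum_nonneg)
  define K where "K = c\<^sup>2 * (real N * P)"
  have Y2: "(norm (Y2 j))\<^sup>2 \<le> K" if "j \<in> {1..N}" for j
  proof -
    have "norm (Y2 j) \<le> c * l1_norm N Y"
      unfolding assms[OF that] c_def by (rule norm_mv_le[OF that])
    then have "(norm (Y2 j))\<^sup>2 \<le> c\<^sup>2 * (l1_norm N Y)\<^sup>2"
      by (metis norm_ge_zero power_mono power_mult_distrib)
    also have "\<dots> \<le> K"
      unfolding K_def P_def by (intro mult_left_mono l1_norm_square_le) auto
    finally show ?thesis .
  qed
  have "(\<Sum>j=1..N. 2 * inner (Y j) (Y1 j) + 2 * inner (Y1 j) (Y2 j))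
      \<le> (\<Sum>j=1..N. (norm (Y j))\<^sup>2 + 2 * (norm (Y1 j))\<^sup>2 + K)"
  proof (rule sum_mono)
    fix j assume "j \<in> {1..N}"
    then show "2 * inner (Y j) (Y1 j) + 2 * inner (Y1 j) (Y2 j)
      \<le> (norm (Y j))\<^sup>2 + 2 * (norm (Y1 j))\<^sup>2 + K"
      using two_inner_le[of "Y j" "Y1 j"] two_inner_le[of "Y1 j" "Y2 j"] Y2 by fastforce
  qed
  also have "\<dots> = P + 2 * Q + real N * K"
    by (simp add: P_def Q_def sum.distrib sum_distrib_left)
  also have "\<dots> \<le> (2 + (real N * c)\<^sup>2) * (P + Q)"
    using \<open>P \<ge> 0\<close> mult_nonneg_nonneg[OF \<open>Q \<ge> 0\<close> zero_le_power2[of "real N * c"]]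
    by (simp add: K_def algebra_simps power2_eq_square)
  finally show ?thesis
    unfolding P_def Q_def c_def by (simp add: sum.distrib)
qed

lemma is_sol_homogeneous_zero_data:
  assumes sol: "is_sol a N T f (\<lambda>_. 0) Y Y1 Y2"
    and init: "\<And>j. j \<in> {1..N} \<Longrightarrow> Y j 0 = 0 \<and> Y1 j 0 = 0"
    and t: "t \<in> {0..T}" and j: "j \<in> {1..N}"
  shows "Y j t = 0 \<and> Y1 j t = 0 \<and> Y2 j t = 0"
proof -
  define C where "C = 2 + (real N * entry_l1_norm N (Bh a N))\<^sup>2"
  define E where "E s = (\<Sum>k=1..N. (norm (Y k s))\<^sup>2 + (norm (Y1 k s))\<^sup>2)" for s
  define e where "e s = (\<Sum>k=1..N. 2 * inner (Y k s) (Y1 k s) + 2 * inner (Y1 k s) (Y2 k s))" for s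
  have sub: "{0..t} \<subseteq> {0..T}" using t by auto
  have "E t \<le> exp (C * t) * 0"
  proof (rule gronwall_deriv[where e = e and a = "\<lambda>_. 0"])
    fix x assume x: "x \<in> {0..t}"
    with sub have "x \<in> {0..T}" by auto
    then show "(E has_real_derivative e x) (at x within {0..t})"
      using sol unfolding is_sol_def E_def e_def
      by (intro DERIV_sum DERIV_add norm_power2_has_real_derivative has_vector_derivative_within_subset[OF _ sub]) auto
    show "e x \<le> 0 + C * E x"
      unfolding e_def E_def C_def add_0_left
      by (rule energy_derivative_le) (rule is_sol_homogeneous_second_deriv[OF sol \<open>x \<in> {0..T}\<close>])
  qed (use t init in \<open>auto simp: C_def E_def\<close>)
  moreover have "0 \<le> E t"
    unfolding E_def by (simp add: sum_nonneg)
  ultimately have "\<forall>k\<in>{1..N}. (norm (Y k t))\<^sup>2 + (norm (Y1 k t))\<^sup>2 = 0"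
    unfolding E_def by (subst sum_nonneg_eq_0_iff[symmetric]) auto
  then have Y: "\<And>k. k \<in> {1..N} \<Longrightarrow> Y k t = 0 \<and> Y1 k t = 0"
    by (simp add: add_nonneg_eq_0_iff)
  then have "Y2 j t = mv (Bh a N) N (\<lambda>_. 0) j"
    using is_sol_homogeneous_second_deriv[OF sol t j] mv_cong[of N "\<lambda>k. Y k t" "\<lambda>_. 0"] by simp
  then show ?thesis
    using Y[OF j] by (simp add: mv_zero)
qed

section \<open>Convolution with an integrable kernel\<close>

definition conv :: "(real \<Rightarrow> real) \<Rightarrow> (real \<Rightarrow> 'a::real_normed_vector) \<Rightarrow> real \<Rightarrow> 'a" where
  "conv g \<phi> t = integral {0..t} (\<lambda>s. g s *\<^sub>R \<phi> (t - s))"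

lemma conv_0 [simp]: "conv g \<phi> 0 = 0"
  unfolding conv_def by simp

lemma conv_scaleR: "conv g (\<lambda>x. c *\<^sub>R \<phi> x) t = c *\<^sub>R conv g \<phi> t"
proof -
  have "(\<lambda>s. g s *\<^sub>R c *\<^sub>R \<phi> (t - s)) = (\<lambda>s. c *\<^sub>R g s *\<^sub>R \<phi> (t - s))"
    by (simp add: mult.commute)
  then show ?thesis
    unfolding conv_def by (simp only: integral_cmul)
qed

lemma conv_uminus: "conv g (\<lambda>x. - \<phi> x) t = - conv g \<phi> t"
  unfolding conv_def by simp

lemma conv_divide:
  fixes c :: "'a::real_normed_field"
  shows "conv g (\<lambda>x. \<phi> x / c) t = conv g \<phi> t / c"
  unfolding conv_def by (simp add: scaleR_conv_of_real)

lemma conv_mv: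
  assumes "\<And>j. j \<in> {1..N} \<Longrightarrow> (\<lambda>s. g s *\<^sub>R f j (t - s)) integrable_on {0..t}"
  shows "conv g (\<lambda>x. mv A N (\<lambda>j. f j x) i) t = mv A N (\<lambda>j. conv g (f j) t) i"
  unfolding conv_def mv_scaleR[symmetric]
  by (rule integral_unique, rule has_integral_mv, rule integrable_integral, rule assms)

lemma conv_const:
  assumes "(g has_integral I) {0..t}"
  shows "conv g (\<lambda>_. c) t = I *\<^sub>R c"
  unfolding conv_def using has_integral_scaleR_left[OF assms, of c] by (rule integral_unique)

lemma absolutely_integrable_kernel_scaleR:
  fixes f :: "real \<Rightarrow> 'a::euclidean_space"
  assumes g: "g absolutely_integrable_on {a..b}" and f: "continuous_on {a..b} f"
  shows "(\<lambda>s. g s *\<^sub>R f s) absolutely_integrable_on {a..b}"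
proof -
  have "bilinear (\<lambda>(z::'a) (r::real). r *\<^sub>R z)"
    using bilinear_conv_bounded_bilinear bounded_bilinear.flip[OF bounded_bilinear_scaleR] by blast
  moreover have "f \<in> borel_measurable (lebesgue_on {a..b})"
    by (rule continuous_imp_measurable_on_sets_lebesgue[OF f]) simp
  moreover have "bounded (f ` {a..b})"
    by (rule compact_imp_bounded[OF compact_continuous_image[OF f compact_Icc]])
  ultimately show ?thesis
    using absolutely_integrable_bounded_measurable_product[of "\<lambda>z r. r *\<^sub>R z" f "{a..b}" g] g by simp
qed

lemma norm_integral_kernel_scaleR_le:
  fixes f :: "real \<Rightarrow> 'a::euclidean_space"
  assumes g: "g absolutely_integrable_on {a..b}" and f: "continuous_on {a..b} f"
    and C: "\<And>s. s \<in> {a..b} \<Longrightarrow> norm (f s) \<le> C"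
  shows "norm (integral {a..b} (\<lambda>s. g s *\<^sub>R f s)) \<le> C * integral {a..b} (\<lambda>s. \<bar>g s\<bar>)"
proof -
  have "(\<lambda>s. \<bar>g s\<bar>) integrable_on {a..b}"
    using g unfolding absolutely_integrable_on_def by simp
  moreover have "norm (g s *\<^sub>R f s) \<le> C * \<bar>g s\<bar>" if "s \<in> {a..b}" for s
    using mult_left_mono[OF C[OF that], of "\<bar>g s\<bar>"] by (simp add: mult.commute)
  ultimately have "norm (integral {a..b} (\<lambda>s. g s *\<^sub>R f s)) \<le> integral {a..b} (\<lambda>s. C * \<bar>g s\<bar>)"
    using absolutely_integrable_kernel_scaleR[OF g f]
    by (intro integral_norm_bound_integral integrable_on_mult_right)
      (auto simp: absolutely_integrable_on_def)
  then show ?thesis by simp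
qed

context
  fixes g :: "real \<Rightarrow> real" and T :: real
  assumes g: "g absolutely_integrable_on {0..T}"
begin

lemma kernel_on_subinterval: "{a..b} \<subseteq> {0..T} \<Longrightarrow> g absolutely_integrable_on {a..b}"
  by (rule absolutely_integrable_on_subinterval[OF g])

lemma abs_kernel_integrable: "{a..b} \<subseteq> {0..T} \<Longrightarrow> (\<lambda>s. \<bar>g s\<bar>) integrable_on {a..b}"
  using kernel_on_subinterval unfolding absolutely_integrable_on_def by simp

lemma kernel_scaleR_integrable:
  fixes f :: "real \<Rightarrow> 'a::euclidean_space"
  shows "{a..b} \<subseteq> {0..T} \<Longrightarrow> continuous_on {a..b} f \<Longrightarrow> (\<lambda>s. g s *\<^sub>R f s) integrable_on {a..b}"
  using absolutely_integrable_kernel_scaleR[OF kernel_on_subinterval]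
  unfolding absolutely_integrable_on_def by blast

lemma conv_integrand_integrable:
  fixes \<phi> :: "real \<Rightarrow> 'a::euclidean_space"
  shows "t \<in> {0..T} \<Longrightarrow> continuous_on UNIV \<phi> \<Longrightarrow> (\<lambda>s. g s *\<^sub>R \<phi> (t - s)) integrable_on {0..t}"
  by (rule kernel_scaleR_integrable) (auto intro: continuous_on_reflect_shift)

lemma integral_abs_kernel_eq:
  assumes "0 \<le> u" "u \<le> v" "v \<le> T"
  shows "integral {u..v} (\<lambda>s. \<bar>g s\<bar>) = \<bar>integral {0..v} (\<lambda>s. \<bar>g s\<bar>) - integral {0..u} (\<lambda>s. \<bar>g s\<bar>)\<bar>"
proof -
  have "0 \<le> integral {u..v} (\<lambda>s. \<bar>g s\<bar>)"
    using assms by (intro integral_nonneg abs_kernel_integrable) auto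
  moreover have "integral {0..u} (\<lambda>s. \<bar>g s\<bar>) + integral {u..v} (\<lambda>s. \<bar>g s\<bar>) = integral {0..v} (\<lambda>s. \<bar>g s\<bar>)"
    using assms abs_kernel_integrable[of 0 v] by (intro Henstock_Kurzweil_Integration.integral_combine) auto
  ultimately show ?thesis by linarith
qed

lemma continuous_on_integral_abs_kernel: "continuous_on {0..T} (\<lambda>x. integral {0..x} (\<lambda>s. \<bar>g s\<bar>))"
  by (rule indefinite_integral_continuous_1[OF abs_kernel_integrable]) simp

lemma conv_add:
  fixes \<phi> \<psi> :: "real \<Rightarrow> 'a::euclidean_space"
  assumes "t \<in> {0..T}" "continuous_on UNIV \<phi>" "continuous_on UNIV \<psi>"
  shows "conv g (\<lambda>x. \<phi> x + \<psi> x) t = conv g \<phi> t + conv g \<psi> t"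
  unfolding conv_def scaleR_add_right
  by (intro integral_add conv_integrand_integrable assms)

lemma conv_diff:
  fixes \<phi> \<psi> :: "real \<Rightarrow> 'a::euclidean_space"
  assumes "t \<in> {0..T}" "continuous_on UNIV \<phi>" "continuous_on UNIV \<psi>"
  shows "conv g (\<lambda>x. \<phi> x - \<psi> x) t = conv g \<phi> t - conv g \<psi> t"
  unfolding conv_def scaleR_diff_right
  by (intro integral_diff conv_integrand_integrable assms)

lemma conv_diff_split:
  fixes \<psi> \<theta> :: "real \<Rightarrow> 'a::euclidean_space"
  assumes uv: "0 \<le> u" "u \<le> v" "v \<le> T" and \<psi>: "continuous_on UNIV \<psi>" and \<theta>: "continuous_on UNIV \<theta>"
  shows "conv g \<psi> v - conv g \<theta> u
    = integral {0..u} (\<lambda>s. g s *\<^sub>R (\<psi> (v - s) - \<theta> (u - s))) + integral {u..v} (\<lambda>s. g s *\<^sub>R \<psi> (v - s))"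
proof -
  have "conv g \<psi> v = integral {0..u} (\<lambda>s. g s *\<^sub>R \<psi> (v - s)) + integral {u..v} (\<lambda>s. g s *\<^sub>R \<psi> (v - s))"
    unfolding conv_def using Henstock_Kurzweil_Integration.integral_combine[where a=0 and c=u and b=v and f="\<lambda>s. g s *\<^sub>R \<psi> (v - s)"] uv
      conv_integrand_integrable[OF _ \<psi>, of v]
    by auto
  moreover have "integral {0..u} (\<lambda>s. g s *\<^sub>R (\<psi> (v - s) - \<theta> (u - s)))
      = integral {0..u} (\<lambda>s. g s *\<^sub>R \<psi> (v - s)) - conv g \<theta> u"
    unfolding conv_def scaleR_diff_right using uv
    by (intro integral_diff kernel_scaleR_integrable conv_integrand_integrable \<theta>)
      (auto intro: continuous_on_reflect_shift[OF \<psi>])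
  ultimately show ?thesis by simp
qed

lemma norm_conv_diff_split_le:
  fixes \<psi> \<theta> :: "real \<Rightarrow> 'a::euclidean_space"
  assumes uv: "0 \<le> u" "u \<le> v" "v \<le> T" and \<psi>: "continuous_on UNIV \<psi>" and \<theta>: "continuous_on UNIV \<theta>"
    and A: "\<And>s. s \<in> {0..u} \<Longrightarrow> norm (\<psi> (v - s) - \<theta> (u - s)) \<le> A" and "0 \<le> A"
    and B: "\<And>s. s \<in> {u..v} \<Longrightarrow> norm (\<psi> (v - s)) \<le> B"
  shows "norm (conv g \<psi> v - conv g \<theta> u) \<le> A * integral {0..T} (\<lambda>s. \<bar>g s\<bar>) + B * integral {u..v} (\<lambda>s. \<bar>g s\<bar>)"
proof -
  have "norm (integral {0..u} (\<lambda>s. g s *\<^sub>R (\<psi> (v - s) - \<theta> (u - s)))) \<le> A * integral {0..u} (\<lambda>s. \<bar>g s\<bar>)"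
    using uv A by (intro norm_integral_kernel_scaleR_le kernel_on_subinterval)
      (auto intro!: continuous_intros continuous_on_reflect_shift \<psi> \<theta>)
  also have "\<dots> \<le> A * integral {0..T} (\<lambda>s. \<bar>g s\<bar>)"
    using uv \<open>0 \<le> A\<close> abs_kernel_integrable[of 0 u] abs_kernel_integrable[of 0 T]
    by (intro mult_left_mono integral_subset_le) auto
  finally have I1: "norm (integral {0..u} (\<lambda>s. g s *\<^sub>R (\<psi> (v - s) - \<theta> (u - s))))
      \<le> A * integral {0..T} (\<lambda>s. \<bar>g s\<bar>)" .
  have I2: "norm (integral {u..v} (\<lambda>s. g s *\<^sub>R \<psi> (v - s))) \<le> B * integral {u..v} (\<lambda>s. \<bar>g s\<bar>)"
    using uv B by (intro norm_integral_kernel_scaleR_le kernel_on_subinterval)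
      (auto intro: continuous_on_reflect_shift[OF \<psi>])
  show ?thesis
    unfolding conv_diff_split[OF uv \<psi> \<theta>]
    by (rule order_trans[OF norm_triangle_ineq add_mono[OF I1 I2]])
qed

lemma norm_conv_diff_le:
  fixes \<psi> \<psi>' :: "real \<Rightarrow> 'a::euclidean_space"
  assumes uv: "0 \<le> u" "u \<le> v" "v \<le> T"
    and \<psi>': "\<And>x. (\<psi> has_vector_derivative \<psi>' x) (at x)"
    and L: "\<And>x. x \<in> {0..T} \<Longrightarrow> norm (\<psi>' x) \<le> L" and K: "\<And>x. x \<in> {0..T} \<Longrightarrow> norm (\<psi> x) \<le> K"
  shows "norm (conv g \<psi> v - conv g \<psi> u)
    \<le> L * (v - u) * integral {0..T} (\<lambda>s. \<bar>g s\<bar>) + K * integral {u..v} (\<lambda>s. \<bar>g s\<bar>)"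
proof -
  have \<psi>: "continuous_on UNIV \<psi>"
    using \<psi>' by (meson continuous_at_imp_continuous_on has_vector_derivative_continuous)
  have "norm (\<psi>' 0) \<le> L"
    using L uv by auto
  then have "0 \<le> L"
    using norm_ge_zero[of "\<psi>' 0"] by linarith
  show ?thesis
  proof (rule norm_conv_diff_split_le[OF uv \<psi> \<psi>])
    show "0 \<le> L * (v - u)"
      using \<open>0 \<le> L\<close> uv by simp
    fix s
    assume "s \<in> {0..u}"
    then have "norm (\<psi> (v - s) - \<psi> (u - s)) \<le> L * \<bar>(v - s) - (u - s)\<bar>"
      using uv by (intro norm_diff_le_of_vector_derivative[OF _ L]) (auto intro: has_vector_derivative_at_within \<psi>')
    then show "norm (\<psi> (v - s) - \<psi> (u - s)) \<le> L * (v - u)"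
      using uv by simp
  next
    fix s
    assume "s \<in> {u..v}"
    then show "norm (\<psi> (v - s)) \<le> K"
      using uv by (intro K) auto
  qed
qed

lemma norm_conv_diff_le_abs:
  fixes \<psi> \<psi>' :: "real \<Rightarrow> 'a::euclidean_space"
  assumes y: "y \<in> {0..T}" and t: "t \<in> {0..T}"
    and \<psi>': "\<And>x. (\<psi> has_vector_derivative \<psi>' x) (at x)"
    and L: "\<And>x. x \<in> {0..T} \<Longrightarrow> norm (\<psi>' x) \<le> L" and K: "\<And>x. x \<in> {0..T} \<Longrightarrow> norm (\<psi> x) \<le> K"
  shows "norm (conv g \<psi> y - conv g \<psi> t) \<le> L * \<bar>y - t\<bar> * integral {0..T} (\<lambda>s. \<bar>g s\<bar>)
    + K * \<bar>integral {0..y} (\<lambda>s. \<bar>g s\<bar>) - integral {0..t} (\<lambda>s. \<bar>g s\<bar>)\<bar>"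
proof (cases "t \<le> y")
  case True
  then show ?thesis
    using norm_conv_diff_le[OF _ True _ \<psi>' L K] integral_abs_kernel_eq[of t y] y t by auto
next
  case False
  then show ?thesis
    using norm_conv_diff_le[of y t, OF _ _ _ \<psi>' L K] integral_abs_kernel_eq[of y t] y t
    by (auto simp: norm_minus_commute abs_minus_commute)
qed

lemma continuous_on_conv:
  fixes \<psi> \<psi>' :: "real \<Rightarrow> 'a::euclidean_space"
  assumes \<psi>': "\<And>x. (\<psi> has_vector_derivative \<psi>' x) (at x)" and "continuous_on UNIV \<psi>'"
  shows "continuous_on {0..T} (conv g \<psi>)"
proof -
  have "continuous_on UNIV \<psi>"
    using \<psi>' by (meson continuous_at_imp_continuous_on has_vector_derivative_continuous)
  then obtain K where K: "\<And>x. x \<in> {0..T} \<Longrightarrow> norm (\<psi> x) \<le> K"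
    by (rule bounded_on_Icc[where a=0 and b=T, OF continuous_on_subset[OF _ subset_UNIV]]) blast
  obtain L where L: "\<And>x. x \<in> {0..T} \<Longrightarrow> norm (\<psi>' x) \<le> L"
    by (rule bounded_on_Icc[where a=0 and b=T, OF continuous_on_subset[OF assms(2) subset_UNIV]]) blast
  define G where "G x = integral {0..x} (\<lambda>s. \<bar>g s\<bar>)" for x
  have "(conv g \<psi> \<longlongrightarrow> conv g \<psi> t) (at t within {0..T})" if t: "t \<in> {0..T}" for t
  proof -
    have "continuous_on {0..T} (\<lambda>y. L * \<bar>y - t\<bar> * G T + K * \<bar>G y - G t\<bar>)"
      unfolding G_def by (intro continuous_intros continuous_on_integral_abs_kernel)
    then have "((\<lambda>y. L * \<bar>y - t\<bar> * G T + K * \<bar>G y - G t\<bar>)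
        \<longlongrightarrow> L * \<bar>t - t\<bar> * G T + K * \<bar>G t - G t\<bar>) (at t within {0..T})"
      using t unfolding continuous_on_def by blast
    then have lim: "((\<lambda>y. L * \<bar>y - t\<bar> * G T + K * \<bar>G y - G t\<bar>) \<longlongrightarrow> 0) (at t within {0..T})"
      by simp
    have "\<forall>\<^sub>F y in at t within {0..T}.
        norm (conv g \<psi> y - conv g \<psi> t) \<le> L * \<bar>y - t\<bar> * G T + K * \<bar>G y - G t\<bar>"
      unfolding eventually_at_filter G_def
      by (intro always_eventually allI impI norm_conv_diff_le_abs[OF _ t \<psi>' L K]) simp
    from Lim_null_comparison[OF this lim] show ?thesis
      by (simp add: LIM_zero_iff)
  qed
  then show ?thesis
    unfolding continuous_on_def by blast
qed

lemma norm_conv_remainder_le: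
  fixes \<phi> \<phi>1 \<phi>2 :: "real \<Rightarrow> 'a::euclidean_space"
  assumes uv: "0 \<le> u" "u \<le> v" "v \<le> T"
    and \<phi>1: "\<And>x. (\<phi> has_vector_derivative \<phi>1 x) (at x)"
    and \<phi>2: "\<And>x. (\<phi>1 has_vector_derivative \<phi>2 x) (at x)"
    and \<phi>0: "\<phi> 0 = 0"
    and K1: "\<And>x. x \<in> {0..T} \<Longrightarrow> norm (\<phi>1 x) \<le> K1"
    and K2: "\<And>x. x \<in> {0..T} \<Longrightarrow> norm (\<phi>2 x) \<le> K2"
  shows "norm (conv g \<phi> v - conv g \<phi> u - (v - u) *\<^sub>R conv g \<phi>1 u)
    \<le> (v - u) * (K2 * (v - u) * integral {0..T} (\<lambda>s. \<bar>g s\<bar>) + K1 * integral {u..v} (\<lambda>s. \<bar>g s\<bar>))"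
proof -
  have c0: "continuous_on UNIV \<phi>" and c1: "continuous_on UNIV \<phi>1"
    using \<phi>1 \<phi>2 by (meson continuous_at_imp_continuous_on has_vector_derivative_continuous)+
  have "norm (\<phi>1 0) \<le> K1" "norm (\<phi>2 0) \<le> K2"
    using K1 K2 uv by auto
  then have "0 \<le> K1" "0 \<le> K2"
    using norm_ge_zero[of "\<phi>1 0"] norm_ge_zero[of "\<phi>2 0"] by linarith+
  define \<theta> where "\<theta> x = \<phi> x + (v - u) *\<^sub>R \<phi>1 x" for x
  have c\<theta>: "continuous_on UNIV \<theta>"
    unfolding \<theta>_def by (intro continuous_intros c0 c1)
  have "conv g \<theta> u = conv g \<phi> u + (v - u) *\<^sub>R conv g \<phi>1 u"
    unfolding \<theta>_def conv_scaleR[symmetric] using uv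
    by (intro conv_add c0 continuous_intros c1) auto
  then have split: "conv g \<phi> v - conv g \<phi> u - (v - u) *\<^sub>R conv g \<phi>1 u = conv g \<phi> v - conv g \<theta> u"
    by (simp add: algebra_simps)
  have "norm (conv g \<phi> v - conv g \<theta> u)
      \<le> K2 * (v - u)\<^sup>2 * integral {0..T} (\<lambda>s. \<bar>g s\<bar>) + K1 * (v - u) * integral {u..v} (\<lambda>s. \<bar>g s\<bar>)"
  proof (rule norm_conv_diff_split_le[OF uv c0 c\<theta>])
    show "0 \<le> K2 * (v - u)\<^sup>2"
      using \<open>0 \<le> K2\<close> by simp
    fix s
    assume "s \<in> {0..u}"
    then have "norm (\<phi> (v - s) - \<phi> (u - s) - ((v - s) - (u - s)) *\<^sub>R \<phi>1 (u - s)) \<le> K2 * ((v - s) - (u - s))\<^sup>2"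
      using uv by (intro norm_taylor1_le[OF _ _ K2]) (auto intro: has_vector_derivative_at_within \<phi>1 \<phi>2)
    then show "norm (\<phi> (v - s) - \<theta> (u - s)) \<le> K2 * (v - u)\<^sup>2"
      by (simp add: \<theta>_def diff_diff_eq)
  next
    fix s
    assume s: "s \<in> {u..v}"
    then have "norm (\<phi> (v - s) - \<phi> 0) \<le> K1 * \<bar>(v - s) - 0\<bar>"
      using uv by (intro norm_diff_le_of_vector_derivative[OF _ K1]) (auto intro: has_vector_derivative_at_within \<phi>1)
    also have "\<dots> \<le> K1 * (v - u)"
      using s uv \<open>0 \<le> K1\<close> by (intro mult_left_mono) auto
    finally show "norm (\<phi> (v - s)) \<le> K1 * (v - u)"
      by (simp add: \<phi>0)
  qed
  then show ?thesis
    unfolding split by (simp add: power2_eq_square algebra_simps)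
qed

lemma norm_conv_remainder_le_abs:
  fixes \<phi> \<phi>1 \<phi>2 :: "real \<Rightarrow> 'a::euclidean_space"
  assumes y: "y \<in> {0..T}" and t: "t \<in> {0..T}"
    and \<phi>1: "\<And>x. (\<phi> has_vector_derivative \<phi>1 x) (at x)"
    and \<phi>2: "\<And>x. (\<phi>1 has_vector_derivative \<phi>2 x) (at x)"
    and \<phi>0: "\<phi> 0 = 0"
    and K1: "\<And>x. x \<in> {0..T} \<Longrightarrow> norm (\<phi>1 x) \<le> K1"
    and K2: "\<And>x. x \<in> {0..T} \<Longrightarrow> norm (\<phi>2 x) \<le> K2"
  shows "norm (conv g \<phi> y - conv g \<phi> t - (y - t) *\<^sub>R conv g \<phi>1 t)
    \<le> \<bar>y - t\<bar> * (K2 * \<bar>y - t\<bar> * integral {0..T} (\<lambda>s. \<bar>g s\<bar>)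
      + K1 * \<bar>integral {0..y} (\<lambda>s. \<bar>g s\<bar>) - integral {0..t} (\<lambda>s. \<bar>g s\<bar>)\<bar>
      + norm (conv g \<phi>1 y - conv g \<phi>1 t))" (is "_ \<le> \<bar>y - t\<bar> * (?\<rho> + ?n)")
proof (cases "t \<le> y")
  case True
  then have "norm (conv g \<phi> y - conv g \<phi> t - (y - t) *\<^sub>R conv g \<phi>1 t) \<le> \<bar>y - t\<bar> * ?\<rho>"
    using norm_conv_remainder_le[OF _ True _ \<phi>1 \<phi>2 \<phi>0 K1 K2] integral_abs_kernel_eq[of t y] y t by auto
  also have "\<dots> \<le> \<bar>y - t\<bar> * (?\<rho> + ?n)"
    by (intro mult_left_mono) auto
  finally show ?thesis .
next
  case False
  define R where "R = conv g \<phi> t - conv g \<phi> y - (t - y) *\<^sub>R conv g \<phi>1 y"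
  have "norm R \<le> \<bar>y - t\<bar> * ?\<rho>"
    using norm_conv_remainder_le[of y t, OF _ _ _ \<phi>1 \<phi>2 \<phi>0 K1 K2] integral_abs_kernel_eq[of y t] y t False
    unfolding R_def by (auto simp: abs_minus_commute)
  moreover have "conv g \<phi> y - conv g \<phi> t - (y - t) *\<^sub>R conv g \<phi>1 t
      = - R + (t - y) *\<^sub>R (conv g \<phi>1 t - conv g \<phi>1 y)"
    unfolding R_def by (simp add: algebra_simps)
  then have "norm (conv g \<phi> y - conv g \<phi> t - (y - t) *\<^sub>R conv g \<phi>1 t) \<le> norm R + \<bar>y - t\<bar> * ?n"
    using norm_triangle_ineq[of "- R" "(t - y) *\<^sub>R (conv g \<phi>1 t - conv g \<phi>1 y)"]
    by (simp add: abs_minus_commute norm_minus_commute)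
  ultimately show ?thesis
    by (simp add: distrib_left)
qed

lemma conv_has_vector_derivative:
  fixes \<phi> \<phi>1 \<phi>2 :: "real \<Rightarrow> 'a::euclidean_space"
  assumes \<phi>1: "\<And>x. (\<phi> has_vector_derivative \<phi>1 x) (at x)"
    and \<phi>2: "\<And>x. (\<phi>1 has_vector_derivative \<phi>2 x) (at x)"
    and c2: "continuous_on UNIV \<phi>2" and \<phi>0: "\<phi> 0 = 0" and t: "t \<in> {0..T}"
  shows "(conv g \<phi> has_vector_derivative conv g \<phi>1 t) (at t within {0..T})"
proof -
  have "continuous_on UNIV \<phi>1"
    using \<phi>2 by (meson continuous_at_imp_continuous_on has_vector_derivative_continuous)
  then obtain K1 where K1: "\<And>x. x \<in> {0..T} \<Longrightarrow> norm (\<phi>1 x) \<le> K1"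
    by (rule bounded_on_Icc[where a=0 and b=T, OF continuous_on_subset[OF _ subset_UNIV]]) blast
  obtain K2 where K2: "\<And>x. x \<in> {0..T} \<Longrightarrow> norm (\<phi>2 x) \<le> K2"
    by (rule bounded_on_Icc[where a=0 and b=T, OF continuous_on_subset[OF c2 subset_UNIV]]) blast
  define G where "G x = integral {0..x} (\<lambda>s. \<bar>g s\<bar>)" for x
  define \<omega> where "\<omega> y = K2 * \<bar>y - t\<bar> * G T + K1 * \<bar>G y - G t\<bar> + norm (conv g \<phi>1 y - conv g \<phi>1 t)" for y
  have "continuous_on {0..T} \<omega>"
    unfolding \<omega>_def G_def
    by (intro continuous_intros continuous_on_integral_abs_kernel continuous_on_conv[OF \<phi>2 c2])
  then have "(\<omega> \<longlongrightarrow> \<omega> t) (at t within {0..T})"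
    using t unfolding continuous_on_def by blast
  then have "(\<omega> \<longlongrightarrow> 0) (at t within {0..T})"
    by (simp add: \<omega>_def)
  moreover have "norm (conv g \<phi> y - conv g \<phi> t - (y - t) *\<^sub>R conv g \<phi>1 t) \<le> \<bar>y - t\<bar> * \<omega> y"
    if "y \<in> {0..T}" for y
    unfolding \<omega>_def G_def by (rule norm_conv_remainder_le_abs[OF that t \<phi>1 \<phi>2 \<phi>0 K1 K2])
  ultimately show ?thesis
    by (intro has_vector_derivative_of_remainder_le)
qed

end

lemma norm_conv_le_sqrt:
  fixes \<phi> :: "real \<Rightarrow> 'a::euclidean_space"
  assumes g: "g absolutely_integrable_on {0..T}" and g2: "(\<lambda>s. (g s)\<^sup>2) integrable_on {0..T}"
    and \<phi>: "continuous_on UNIV \<phi>" and t: "t \<in> {0..T}"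
  shows "norm (conv g \<phi> t) \<le> sqrt (integral {0..T} (\<lambda>s. (g s)\<^sup>2) * integral {0..t} (\<lambda>s. (norm (\<phi> s))\<^sup>2))"
proof -
  have sub: "{0..t} \<subseteq> {0..T}" using t by auto
  have ai: "(\<lambda>s. g s *\<^sub>R \<phi> (t - s)) absolutely_integrable_on {0..t}"
    by (rule absolutely_integrable_kernel_scaleR[OF absolutely_integrable_on_subinterval[OF g sub]])
      (rule continuous_on_reflect_shift[OF \<phi>])
  then have gi: "(\<lambda>s. \<bar>g s\<bar> * norm (\<phi> (t - s))) integrable_on {0..t}"
    unfolding absolutely_integrable_on_def by simp
  have c2: "continuous_on {0..t} (\<lambda>s. (norm (\<phi> s))\<^sup>2)"
    by (intro continuous_intros continuous_on_subset[OF \<phi>]) auto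
  then have \<phi>2: "((\<lambda>s. (norm (\<phi> (t - s)))\<^sup>2) has_integral integral {0..t} (\<lambda>s. (norm (\<phi> s))\<^sup>2)) {0..t}"
    by (intro has_integral_reflect_Icc integrable_integral integrable_continuous_interval)
  have g2t: "(\<lambda>s. (g s)\<^sup>2) integrable_on {0..t}"
    by (rule integrable_on_subinterval[OF g2 sub])
  have "norm (conv g \<phi> t) \<le> integral {0..t} (\<lambda>s. \<bar>g s\<bar> * norm (\<phi> (t - s)))"
    unfolding conv_def using ai gi
    by (intro integral_norm_bound_integral) (auto simp: absolutely_integrable_on_def)
  also have "\<dots> \<le> sqrt (integral {0..t} (\<lambda>s. \<bar>g s\<bar>\<^sup>2) * integral {0..t} (\<lambda>s. (norm (\<phi> (t - s)))\<^sup>2))"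
    using gi g2t \<phi>2 by (intro integral_mult_le_sqrt) auto
  also have "\<dots> \<le> sqrt (integral {0..T} (\<lambda>s. (g s)\<^sup>2) * integral {0..t} (\<lambda>s. (norm (\<phi> s))\<^sup>2))"
    using integral_unique[OF \<phi>2] integral_nonneg[OF integrable_continuous_interval[OF c2]]
      integral_subset_le[OF sub g2t g2]
    by (auto intro!: mult_right_mono)
  finally show ?thesis .
qed

section \<open>A Volterra equation of the second kind\<close>

definition volterra_const :: "real \<Rightarrow> real \<Rightarrow> real \<Rightarrow> real" where
  "volterra_const l0 G2 T = 2 / l0\<^sup>2 * exp (2 * G2 / l0\<^sup>2 * T)"

lemma volterra_const_pos: "l0 \<noteq> 0 \<Longrightarrow> 0 < volterra_const l0 G2 T"
  unfolding volterra_const_def by simp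

lemma volterra_pointwise_le:
  fixes \<phi> y :: "real \<Rightarrow> 'a::euclidean_space"
  assumes g: "g absolutely_integrable_on {0..T}" and g2: "(\<lambda>s. (g s)\<^sup>2) integrable_on {0..T}"
    and l0: "l0 \<noteq> 0" and \<phi>: "continuous_on UNIV \<phi>"
    and t: "t \<in> {0..T}" and y: "y t = l0 *\<^sub>R \<phi> t + conv g \<phi> t"
  shows "(norm (\<phi> t))\<^sup>2 \<le> 2 / l0\<^sup>2 * (norm (y t))\<^sup>2
    + 2 / l0\<^sup>2 * integral {0..T} (\<lambda>s. (g s)\<^sup>2) * integral {0..t} (\<lambda>s. (norm (\<phi> s))\<^sup>2)"
proof -
  define P where "P = integral {0..T} (\<lambda>s. (g s)\<^sup>2) * integral {0..t} (\<lambda>s. (norm (\<phi> s))\<^sup>2)"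
  have "0 \<le> P"
    unfolding P_def using t
    by (intro mult_nonneg_nonneg integral_nonneg g2 integrable_continuous_interval continuous_intros
        continuous_on_subset[OF \<phi>]) auto
  have "\<bar>l0\<bar> * norm (\<phi> t) = norm (y t - conv g \<phi> t)"
    using y by simp
  also have "\<dots> \<le> norm (y t) + norm (conv g \<phi> t)"
    by (rule norm_triangle_ineq4)
  finally have "\<bar>l0\<bar> * norm (\<phi> t) \<le> norm (y t) + sqrt P"
    using norm_conv_le_sqrt[OF g g2 \<phi> t] unfolding P_def by linarith
  then have "l0\<^sup>2 * (norm (\<phi> t))\<^sup>2 \<le> (norm (y t) + sqrt P)\<^sup>2"
    by (metis abs_ge_zero norm_ge_zero power_mono power_mult_distrib power2_abs mult_nonneg_nonneg)
  also have "\<dots> \<le> 2 * (norm (y t))\<^sup>2 + 2 * P"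
    using two_inner_le[of "norm (y t)" "sqrt P"] \<open>0 \<le> P\<close> by (simp add: power2_sum)
  finally show ?thesis
    unfolding P_def using l0 by (simp add: field_simps)
qed

lemma volterra_L2_bound:
  fixes \<phi> y :: "real \<Rightarrow> 'a::euclidean_space"
  assumes g: "g absolutely_integrable_on {0..T}" and g2: "(\<lambda>s. (g s)\<^sup>2) integrable_on {0..T}"
    and l0: "l0 \<noteq> 0" and T: "0 \<le> T"
    and \<phi>: "continuous_on UNIV \<phi>" and cy: "continuous_on {0..T} y"
    and y: "\<And>t. t \<in> {0..T} \<Longrightarrow> y t = l0 *\<^sub>R \<phi> t + conv g \<phi> t"
  shows "integral {0..T} (\<lambda>t. (norm (\<phi> t))\<^sup>2)
    \<le> volterra_const l0 (integral {0..T} (\<lambda>s. (g s)\<^sup>2)) T * integral {0..T} (\<lambda>t. (norm (y t))\<^sup>2)"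
proof -
  define G2 where "G2 = integral {0..T} (\<lambda>s. (g s)\<^sup>2)"
  define \<alpha> where "\<alpha> = 2 / l0\<^sup>2"
  have "0 \<le> G2"
    unfolding G2_def by (rule integral_nonneg[OF g2]) simp
  have "integral {0..T} (\<lambda>s. (norm (\<phi> s))\<^sup>2) \<le> exp (\<alpha> * G2 * T) * (\<alpha> * integral {0..T} (\<lambda>s. (norm (y s))\<^sup>2))"
  proof (rule gronwall_deriv[OF T])
    show "0 \<le> \<alpha> * G2"
      unfolding \<alpha>_def using \<open>0 \<le> G2\<close> by simp
    fix t assume t: "t \<in> {0..T}"
    show "((\<lambda>u. integral {0..u} (\<lambda>s. (norm (\<phi> s))\<^sup>2)) has_real_derivative (norm (\<phi> t))\<^sup>2) (at t within {0..T})"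
      unfolding has_real_derivative_iff_has_vector_derivative
      by (rule integral_has_vector_derivative[OF _ t]) (intro continuous_intros continuous_on_subset[OF \<phi>]; simp)
    have "((\<lambda>u. integral {0..u} (\<lambda>s. (norm (y s))\<^sup>2)) has_real_derivative (norm (y t))\<^sup>2) (at t within {0..T})"
      unfolding has_real_derivative_iff_has_vector_derivative
      by (rule integral_has_vector_derivative[OF _ t]) (intro continuous_intros cy)
    then show "((\<lambda>u. \<alpha> * integral {0..u} (\<lambda>s. (norm (y s))\<^sup>2)) has_real_derivative \<alpha> * (norm (y t))\<^sup>2)
        (at t within {0..T})"
      by (rule DERIV_cmult)
    show "0 \<le> \<alpha> * (norm (y t))\<^sup>2"
      unfolding \<alpha>_def by simp
    show "(norm (\<phi> t))\<^sup>2 \<le> \<alpha> * (norm (y t))\<^sup>2 + \<alpha> * G2 * integral {0..t} (\<lambda>s. (norm (\<phi> s))\<^sup>2)"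
      unfolding \<alpha>_def G2_def by (rule volterra_pointwise_le[where y=y, OF g g2 l0 \<phi> t y[OF t]])
  qed simp
  then show ?thesis
    unfolding volterra_const_def \<alpha>_def G2_def by (simp add: mult_ac)
qed

section \<open>Duhamel's formula\<close>

text \<open>With \<open>l0 = \<lambda>(0)\<close> and \<open>g = \<lambda>'\<close>, \<open>duhamel_deriv a N g l0 F k\<close> is the \<open>(k+1)\<close>-th time
  derivative of the solution of \<open>M\<^sub>h V'' + K\<^sub>h V + L\<^sub>h V = \<lambda>(t) M\<^sub>h F\<close>, \<open>V(0) = V'(0) = 0\<close>.\<close>

definition duhamel_deriv ::
  "(real \<Rightarrow> real) \<Rightarrow> nat \<Rightarrow> (real \<Rightarrow> real) \<Rightarrow> real \<Rightarrow> (nat \<Rightarrow> complex) \<Rightarrow> nat \<Rightarrow> nat \<Rightarrow> real \<Rightarrow> complex" where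
  "duhamel_deriv a N g l0 F k j t = l0 *\<^sub>R free_sol a N F k j t + conv g (free_sol a N F k j) t"

context
  fixes a :: "real \<Rightarrow> real" and N :: nat and T :: real and lam g :: "real \<Rightarrow> real"
    and F :: "nat \<Rightarrow> complex"
  assumes g: "g absolutely_integrable_on {0..T}"
    and g_lam: "\<And>t. t \<in> {0..T} \<Longrightarrow> (g has_integral (lam t - lam 0)) {0..t}"
begin

lemma conv_free_sol_has_vector_derivative:
  assumes "j \<in> {1..N}" "t \<in> {0..T}"
  shows "(conv g (free_sol a N F 0 j) has_vector_derivative conv g (free_sol a N F 1 j) t) (at t within {0..T})"
  using conv_has_vector_derivative[OF g free_sol_has_vector_derivative[OF assms(1)]
      free_sol_has_vector_derivative[OF assms(1)] continuous_on_free_sol[OF assms(1)] _ assms(2)]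
  by (simp add: free_sol_initial)

lemma duhamel_deriv_has_vector_derivative:
  assumes "j \<in> {1..N}" "t \<in> {0..T}"
  shows "(duhamel_deriv a N g (lam 0) F 0 j has_vector_derivative duhamel_deriv a N g (lam 0) F 1 j t)
    (at t within {0..T})"
proof -
  have "(free_sol a N F 0 j has_vector_derivative free_sol a N F 1 j t) (at t within {0..T})"
    using free_sol_has_vector_derivative[OF assms(1), of a F 0] by simp
  then show ?thesis
    unfolding duhamel_deriv_def[abs_def]
    by (intro has_vector_derivative_add bounded_linear.has_vector_derivative[OF bounded_linear_scaleR_right]
        conv_free_sol_has_vector_derivative[OF assms])
qed

lemma continuous_on_duhamel_deriv:
  assumes "j \<in> {1..N}"
  shows "continuous_on {0..T} (duhamel_deriv a N g (lam 0) F k j)"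
  unfolding duhamel_deriv_def[abs_def]
  by (intro continuous_intros continuous_on_free_sol[OF assms]
      continuous_on_conv[OF g free_sol_has_vector_derivative[OF assms] continuous_on_free_sol[OF assms]])

lemma has_integral_duhamel_deriv_2:
  assumes j: "j \<in> {1..N}" and t: "t \<in> {0..T}"
  shows "(duhamel_deriv a N g (lam 0) F 2 j has_integral
    duhamel_deriv a N g (lam 0) F 1 j t - complex_of_real (lam t) * F j) {0..t}"
proof -
  txt \<open>Since \<open>\<Phi>'(0) = F \<noteq> 0\<close>, the convolution \<open>\<lambda>' * \<Phi>'\<close> need not be differentiable; but
    \<open>\<lambda>' * (\<Phi>' - F)\<close> is, and \<open>\<lambda>' * F = (\<lambda>(t) - \<lambda>(0)) F\<close>.\<close>
  define R where "R \<tau> = lam 0 *\<^sub>R free_sol a N F 1 j \<tau> + conv g (\<lambda>x. free_sol a N F 1 j x - F j) \<tau>" for \<tau>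
  have sub: "{0..t} \<subseteq> {0..T}" using t by auto
  have cF: "continuous_on UNIV (free_sol a N F k j)" for k
    by (rule continuous_on_free_sol[OF j])
  have "(duhamel_deriv a N g (lam 0) F 2 j has_integral (R t - R 0)) {0..t}"
  proof (rule fundamental_theorem_of_calculus)
    fix x assume "x \<in> {0..t}"
    then have "x \<in> {0..T}" using sub by auto
    have d: "((\<lambda>x. free_sol a N F 1 j x - F j) has_vector_derivative free_sol a N F 2 j y) (at y)" for y
      using has_vector_derivative_diff[OF free_sol_has_vector_derivative[OF j] has_vector_derivative_const]
      by (simp add: numeral_2_eq_2)
    have "(conv g (\<lambda>x. free_sol a N F 1 j x - F j) has_vector_derivative conv g (free_sol a N F 2 j) x)
        (at x within {0..T})"
      by (rule conv_has_vector_derivative[OF g d free_sol_has_vector_derivative[OF j] cF _ \<open>x \<in> {0..T}\<close>])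
        (use free_sol_initial(2) in simp)
    moreover have "(free_sol a N F 1 j has_vector_derivative free_sol a N F 2 j x) (at x within {0..T})"
      using free_sol_has_vector_derivative[OF j, of a F 1] by (simp add: numeral_2_eq_2)
    ultimately show "(R has_vector_derivative duhamel_deriv a N g (lam 0) F 2 j x) (at x within {0..t})"
      unfolding R_def[abs_def] duhamel_deriv_def
      by (intro has_vector_derivative_add bounded_linear.has_vector_derivative[OF bounded_linear_scaleR_right]
          has_vector_derivative_within_subset[OF _ sub])
  qed (use t in simp)
  moreover have "R t - R 0 = duhamel_deriv a N g (lam 0) F 1 j t - complex_of_real (lam t) * F j"
  proof -
    have "conv g (\<lambda>x. free_sol a N F 1 j x - F j) t = conv g (free_sol a N F 1 j) t - (lam t - lam 0) *\<^sub>R F j"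
      using conv_diff[OF g t cF continuous_on_const] conv_const[OF g_lam[OF t]] by simp
    then show ?thesis
      unfolding R_def duhamel_deriv_def using free_sol_initial(2)[of a N F j]
      by (simp add: scaleR_conv_of_real algebra_simps)
  qed
  ultimately show ?thesis by simp
qed

lemma mv_Ah_duhamel_deriv:
  assumes \<tau>: "\<tau> \<in> {0..T}" and i: "i \<in> {1..N}"
  shows "mv (Ah a N) N (\<lambda>j. duhamel_deriv a N g (lam 0) F 0 j \<tau>) i
    = - mv (Mh N) N (\<lambda>j. duhamel_deriv a N g (lam 0) F 2 j \<tau>) i"
proof -
  have ode: "mv (Ah a N) N (\<lambda>j. free_sol a N F 0 j x) i = - mv (Mh N) N (\<lambda>j. free_sol a N F 2 j x) i" for x
    using free_sol_ode[OF i, of a F 0 x] unfolding mv_Ah numeral_2_eq_2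
    by (simp add: eq_neg_iff_add_eq_0 algebra_simps)
  have int: "(\<lambda>s. g s *\<^sub>R free_sol a N F k j (\<tau> - s)) integrable_on {0..\<tau>}" if "j \<in> {1..N}" for j k
    by (rule conv_integrand_integrable[OF g \<tau> continuous_on_free_sol[OF that]])
  have "mv (Ah a N) N (\<lambda>j. conv g (free_sol a N F 0 j) \<tau>) i
      = conv g (\<lambda>x. mv (Ah a N) N (\<lambda>j. free_sol a N F 0 j x) i) \<tau>"
    by (rule conv_mv[symmetric]) (rule int)
  also have "\<dots> = - mv (Mh N) N (\<lambda>j. conv g (free_sol a N F 2 j) \<tau>) i"
    unfolding ode conv_uminus by (subst conv_mv) (auto intro: int)
  finally have "mv (Ah a N) N (\<lambda>j. conv g (free_sol a N F 0 j) \<tau>) i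
      = - mv (Mh N) N (\<lambda>j. conv g (free_sol a N F 2 j) \<tau>) i" .
  then show ?thesis
    unfolding duhamel_deriv_def mv_add mv_scaleR ode by simp
qed

lemma is_sol_duhamel:
  "is_sol a N T (\<lambda>t. complex_of_real (lam t)) F (\<lambda>j t. integral {0..t} (duhamel_deriv a N g (lam 0) F 0 j))
     (duhamel_deriv a N g (lam 0) F 0) (duhamel_deriv a N g (lam 0) F 1)"
  unfolding is_sol_def
proof (intro conjI ballI)
  fix j t assume j: "j \<in> {1..N}" and t: "t \<in> {0..T}"
  show "((\<lambda>t. integral {0..t} (duhamel_deriv a N g (lam 0) F 0 j)) has_vector_derivative
      duhamel_deriv a N g (lam 0) F 0 j t) (at t within {0..T})"
    by (rule integral_has_vector_derivative[OF continuous_on_duhamel_deriv[OF j] t])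
  show "(duhamel_deriv a N g (lam 0) F 0 j has_vector_derivative duhamel_deriv a N g (lam 0) F 1 j t)
      (at t within {0..T})"
    by (rule duhamel_deriv_has_vector_derivative[OF j t])
next
  fix t i assume t: "t \<in> {0..T}" and i: "i \<in> {1..N}"
  have sub: "{0..t} \<subseteq> {0..T}" using t by auto
  have "((\<lambda>\<tau>. mv (Ah a N) N (\<lambda>j. duhamel_deriv a N g (lam 0) F 0 j \<tau>) i) has_integral
      mv (Ah a N) N (\<lambda>j. integral {0..t} (duhamel_deriv a N g (lam 0) F 0 j)) i) {0..t}"
    by (intro has_integral_mv integrable_integral integrable_continuous_interval
        continuous_on_subset[OF continuous_on_duhamel_deriv sub])
  moreover have "((\<lambda>\<tau>. mv (Ah a N) N (\<lambda>j. duhamel_deriv a N g (lam 0) F 0 j \<tau>) i) has_integral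
      - mv (Mh N) N (\<lambda>j. duhamel_deriv a N g (lam 0) F 1 j t - complex_of_real (lam t) * F j) i) {0..t}"
    using sub mv_Ah_duhamel_deriv[OF _ i]
    by (intro has_integral_eq[OF _ has_integral_neg[OF has_integral_mv[OF has_integral_duhamel_deriv_2[OF _ t]]]])
      auto
  ultimately have "mv (Ah a N) N (\<lambda>j. integral {0..t} (duhamel_deriv a N g (lam 0) F 0 j)) i
      = - mv (Mh N) N (\<lambda>j. duhamel_deriv a N g (lam 0) F 1 j t - complex_of_real (lam t) * F j) i"
    by (rule has_integral_unique)
  then show "mv (Mh N) N (\<lambda>j. duhamel_deriv a N g (lam 0) F 1 j t) i
      + mv (Kh N) N (\<lambda>j. integral {0..t} (duhamel_deriv a N g (lam 0) F 0 j)) i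
      + mv (Lh a N) N (\<lambda>j. integral {0..t} (duhamel_deriv a N g (lam 0) F 0 j)) i
      = complex_of_real (lam t) * mv (Mh N) N F i"
    unfolding mv_Ah mv_diff mv_mult by (simp add: algebra_simps)
qed

lemma forced_sol_eq_duhamel_deriv:
  assumes sol: "is_sol a N T (\<lambda>t. complex_of_real (lam t)) F V V' V''"
    and init: "\<forall>j\<in>{1..N}. V j 0 = 0 \<and> V' j 0 = 0"
    and t: "t \<in> {0..T}" and j: "j \<in> {1..N}"
  shows "V' j t = duhamel_deriv a N g (lam 0) F 0 j t \<and> V'' j t = duhamel_deriv a N g (lam 0) F 1 j t"
proof -
  have "is_sol a N T (\<lambda>t. complex_of_real (lam t)) (\<lambda>_. 0)
      (\<lambda>j t. V j t - integral {0..t} (duhamel_deriv a N g (lam 0) F 0 j))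
      (\<lambda>j t. V' j t - duhamel_deriv a N g (lam 0) F 0 j t) (\<lambda>j t. V'' j t - duhamel_deriv a N g (lam 0) F 1 j t)"
    using is_sol_diff[OF sol is_sol_duhamel] by simp
  moreover have "duhamel_deriv a N g (lam 0) F 0 j 0 = 0" for j
    unfolding duhamel_deriv_def by (simp add: free_sol_initial)
  ultimately have "V j t - integral {0..t} (duhamel_deriv a N g (lam 0) F 0 j) = 0
      \<and> V' j t - duhamel_deriv a N g (lam 0) F 0 j t = 0 \<and> V'' j t - duhamel_deriv a N g (lam 0) F 1 j t = 0"
    using init by (intro is_sol_homogeneous_zero_data[OF _ _ t j]) auto
  then show ?thesis by simp
qed

lemma volterra_bound_duhamel_deriv:
  assumes g2: "(\<lambda>s. (g s)\<^sup>2) integrable_on {0..T}" and lam0: "lam 0 \<noteq> 0" and T: "0 \<le> T"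
    and j: "j \<in> {1..N}"
  shows "integral {0..T} (\<lambda>t. (cmod (free_sol a N F k j t / c))\<^sup>2)
    \<le> volterra_const (lam 0) (integral {0..T} (\<lambda>s. (g s)\<^sup>2)) T
      * integral {0..T} (\<lambda>t. (cmod (duhamel_deriv a N g (lam 0) F k j t / c))\<^sup>2)"
proof (rule volterra_L2_bound[OF g g2 lam0 T])
  show "continuous_on UNIV (\<lambda>t. free_sol a N F k j t / c)"
    unfolding divide_inverse by (intro continuous_intros continuous_on_free_sol[OF j])
  show "continuous_on {0..T} (\<lambda>t. duhamel_deriv a N g (lam 0) F k j t / c)"
    unfolding divide_inverse by (intro continuous_intros continuous_on_duhamel_deriv[OF j])
  show "duhamel_deriv a N g (lam 0) F k j t / c
      = lam 0 *\<^sub>R (free_sol a N F k j t / c) + conv g (\<lambda>t. free_sol a N F k j t / c) t" for t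
    unfolding conv_divide duhamel_deriv_def by (simp add: add_divide_distrib scaleR_conv_of_real)
qed

lemma observability_duhamel_deriv:
  assumes g2: "(\<lambda>s. (g s)\<^sup>2) integrable_on {0..T}" and lam0: "lam 0 \<noteq> 0" and T: "0 \<le> T"
    and N: "1 \<le> N"
    and obs: "\<And>U U' U''. is_sol a N T (\<lambda>_. 0) (\<lambda>_. 0) U U' U'' \<Longrightarrow>
      integral {0..T} (\<lambda>t. (cmod (U 1 t / hN N))\<^sup>2 + (cmod (U' 1 t / 2))\<^sup>2)
        \<ge> \<kappa>0 * (norm1_sq a N (\<lambda>j. U j 0) + (normM N (\<lambda>j. U' j 0))\<^sup>2)"
  shows "\<kappa>0 * (normM N F)\<^sup>2 \<le> volterra_const (lam 0) (integral {0..T} (\<lambda>s. (g s)\<^sup>2)) T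
    * integral {0..T} (\<lambda>t. (cmod (duhamel_deriv a N g (lam 0) F 0 1 t / hN N))\<^sup>2
        + (cmod (duhamel_deriv a N g (lam 0) F 1 1 t / 2))\<^sup>2)"
proof -
  define C where "C = volterra_const (lam 0) (integral {0..T} (\<lambda>s. (g s)\<^sup>2)) T"
  define \<Phi> where "\<Phi> k t = free_sol a N F k 1 t" for k t
  define D where "D k t = duhamel_deriv a N g (lam 0) F k 1 t" for k t
  have j1: "1 \<in> {1..N}" using N by simp
  have int: "(\<lambda>t. (cmod (f t / c))\<^sup>2) integrable_on {0..T}" if "continuous_on {0..T} f" for f :: "real \<Rightarrow> complex" and c
    unfolding divide_inverse by (intro integrable_continuous_interval continuous_intros that)
  have c\<Phi>: "continuous_on {0..T} (\<Phi> k)" and cD: "continuous_on {0..T} (D k)" for k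
    unfolding \<Phi>_def[abs_def] D_def[abs_def] by (intro continuous_on_free_sol continuous_on_duhamel_deriv j1)+
  have "norm1_sq a N (\<lambda>j. free_sol a N F 0 j 0) = 0" "(\<lambda>j. free_sol a N F 1 j 0) = F"
    using free_sol_initial[of a N F] by (simp_all add: norm1_sq_def ip_def)
  then have "\<kappa>0 * (normM N F)\<^sup>2 \<le> integral {0..T} (\<lambda>t. (cmod (\<Phi> 0 t / hN N))\<^sup>2 + (cmod (\<Phi> 1 t / 2))\<^sup>2)"
    using obs[OF is_sol_free_sol[of a N T F]] unfolding \<Phi>_def by simp
  also have "\<dots> = integral {0..T} (\<lambda>t. (cmod (\<Phi> 0 t / hN N))\<^sup>2) + integral {0..T} (\<lambda>t. (cmod (\<Phi> 1 t / 2))\<^sup>2)"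
    by (intro integral_add int c\<Phi>)
  also have "\<dots> \<le> C * integral {0..T} (\<lambda>t. (cmod (D 0 t / hN N))\<^sup>2) + C * integral {0..T} (\<lambda>t. (cmod (D 1 t / 2))\<^sup>2)"
    unfolding \<Phi>_def D_def C_def by (intro add_mono volterra_bound_duhamel_deriv[OF g2 lam0 T j1])
  also have "\<dots> = C * integral {0..T} (\<lambda>t. (cmod (D 0 t / hN N))\<^sup>2 + (cmod (D 1 t / 2))\<^sup>2)"
    unfolding distrib_left[symmetric] by (intro arg_cong[where f="\<lambda>x. C * x"] integral_add[symmetric] int cD)
  finally show ?thesis
    unfolding C_def D_def .
qed

end

lemma norm_source_diff_le:
  assumes g: "g absolutely_integrable_on {0..T}" and g2: "(\<lambda>s. (g s)\<^sup>2) integrable_on {0..T}"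
    and g_lam: "\<And>t. t \<in> {0..T} \<Longrightarrow> (g has_integral (lam t - lam 0)) {0..t}" and lam0: "lam 0 \<noteq> 0" and T: "0 \<le> T"
    and \<kappa>0: "0 < \<kappa>0" and N: "1 \<le> N"
    and obs: "\<And>U U' U''. is_sol a N T (\<lambda>_. 0) (\<lambda>_. 0) U U' U'' \<Longrightarrow>
      integral {0..T} (\<lambda>t. (cmod (U 1 t / hN N))\<^sup>2 + (cmod (U' 1 t / 2))\<^sup>2)
        \<ge> \<kappa>0 * (norm1_sq a N (\<lambda>j. U j 0) + (normM N (\<lambda>j. U' j 0))\<^sup>2)"
    and sol_h: "is_sol a N T (\<lambda>t. complex_of_real (lam t)) Fh Vh Vh' Vh''"
    and init_h: "\<forall>j\<in>{1..N}. Vh j 0 = 0 \<and> Vh' j 0 = 0"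
    and sol_t: "is_sol a N T (\<lambda>t. complex_of_real (lam t)) Ft Vt Vt' Vt''"
    and init_t: "\<forall>j\<in>{1..N}. Vt j 0 = 0 \<and> Vt' j 0 = 0"
  shows "normM N (\<lambda>j. Fh j - Ft j) \<le> sqrt (volterra_const (lam 0) (integral {0..T} (\<lambda>s. (g s)\<^sup>2)) T / \<kappa>0)
    * sqrt (integral {0..T} (\<lambda>t. (cmod ((Vh' 1 t - Vt' 1 t) / hN N))\<^sup>2 + (cmod ((Vh'' 1 t - Vt'' 1 t) / 2))\<^sup>2))"
proof -
  define C where "C = volterra_const (lam 0) (integral {0..T} (\<lambda>s. (g s)\<^sup>2)) T"
  define F where "F j = Fh j - Ft j" for j
  define I where "I = integral {0..T} (\<lambda>t.
    (cmod ((Vh' 1 t - Vt' 1 t) / hN N))\<^sup>2 + (cmod ((Vh'' 1 t - Vt'' 1 t) / 2))\<^sup>2)"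
  have "1 \<in> {1..N}" using N by simp
  then have "Vh' 1 t - Vt' 1 t = duhamel_deriv a N g (lam 0) F 0 1 t
      \<and> Vh'' 1 t - Vt'' 1 t = duhamel_deriv a N g (lam 0) F 1 1 t" if "t \<in> {0..T}" for t
    using forced_sol_eq_duhamel_deriv[OF g g_lam is_sol_diff[OF sol_h sol_t] _ that] init_h init_t
    unfolding F_def by auto
  then have W: "integral {0..T} (\<lambda>t. (cmod (duhamel_deriv a N g (lam 0) F 0 1 t / hN N))\<^sup>2
      + (cmod (duhamel_deriv a N g (lam 0) F 1 1 t / 2))\<^sup>2) = I"
    unfolding I_def by (intro integral_cong) simp
  have "\<kappa>0 * (normM N F)\<^sup>2 \<le> C * I"
    unfolding C_def W[symmetric] by (rule observability_duhamel_deriv[OF g g_lam g2 lam0 T N obs])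
  then have "(normM N F)\<^sup>2 \<le> C / \<kappa>0 * I"
    using \<kappa>0 by (simp add: field_simps)
  then show ?thesis
    unfolding F_def[abs_def] I_def C_def real_sqrt_mult[symmetric] by (rule real_le_rsqrt)
qed

lemma source_stability:
  assumes T0: "unif_obs_time a T0" and T: "T0 < T" and lam: "H1 T lam" and lam0: "lam 0 \<noteq> 0"
  shows "\<exists>\<kappa>>0. \<forall>N\<ge>1. \<forall>Fh Ft Vh Vh' Vh'' Vt Vt' Vt''.
     is_sol a N T (\<lambda>t. complex_of_real (lam t)) Fh Vh Vh' Vh'' \<and> (\<forall>j\<in>{1..N}. Vh j 0 = 0 \<and> Vh' j 0 = 0) \<and>
     is_sol a N T (\<lambda>t. complex_of_real (lam t)) Ft Vt Vt' Vt'' \<and> (\<forall>j\<in>{1..N}. Vt j 0 = 0 \<and> Vt' j 0 = 0) \<longrightarrow>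
     normM N (\<lambda>j. Fh j - Ft j)
       \<le> \<kappa> * sqrt (integral {0..T} (\<lambda>t. (cmod ((Vh' 1 t - Vt' 1 t) / hN N))\<^sup>2 + (cmod ((Vh'' 1 t - Vt'' 1 t) / 2))\<^sup>2))"
proof -
  obtain \<kappa>0 where \<kappa>0: "0 < \<kappa>0" and "0 < T0"
    and obs: "\<forall>N\<ge>1. \<forall>T>T0. \<forall>U U' U''. is_sol a N T (\<lambda>_. 0) (\<lambda>_. 0) U U' U'' \<longrightarrow>
      integral {0..T} (\<lambda>t. (cmod (U 1 t / hN N))\<^sup>2 + (cmod (U' 1 t / 2))\<^sup>2)
        \<ge> \<kappa>0 * (norm1_sq a N (\<lambda>j. U j 0) + (normM N (\<lambda>j. U' j 0))\<^sup>2)"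
    using T0 unfolding unif_obs_time_def by blast
  obtain g where g: "g absolutely_integrable_on {0..T}" and g2: "(\<lambda>s. (g s)\<^sup>2) integrable_on {0..T}"
    and g_lam: "\<And>t. t \<in> {0..T} \<Longrightarrow> (g has_integral (lam t - lam 0)) {0..t}"
    using lam unfolding H1_def by blast
  define C where "C = volterra_const (lam 0) (integral {0..T} (\<lambda>s. (g s)\<^sup>2)) T"
  have "normM N (\<lambda>j. Fh j - Ft j)
      \<le> sqrt (C / \<kappa>0) * sqrt (integral {0..T} (\<lambda>t. (cmod ((Vh' 1 t - Vt' 1 t) / hN N))\<^sup>2 + (cmod ((Vh'' 1 t - Vt'' 1 t) / 2))\<^sup>2))"
    if "1 \<le> N" and "is_sol a N T (\<lambda>t. complex_of_real (lam t)) Fh Vh Vh' Vh''"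
      and "\<forall>j\<in>{1..N}. Vh j 0 = 0 \<and> Vh' j 0 = 0"
      and "is_sol a N T (\<lambda>t. complex_of_real (lam t)) Ft Vt Vt' Vt''"
      and "\<forall>j\<in>{1..N}. Vt j 0 = 0 \<and> Vt' j 0 = 0"
    for N Fh Ft Vh Vh' Vh'' Vt Vt' Vt''
  proof -
    have "\<And>U U' U''. is_sol a N T (\<lambda>_. 0) (\<lambda>_. 0) U U' U'' \<Longrightarrow>
      integral {0..T} (\<lambda>t. (cmod (U 1 t / hN N))\<^sup>2 + (cmod (U' 1 t / 2))\<^sup>2)
        \<ge> \<kappa>0 * (norm1_sq a N (\<lambda>j. U j 0) + (normM N (\<lambda>j. U' j 0))\<^sup>2)"
      using obs T \<open>1 \<le> N\<close> by blast
    then show ?thesis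
      unfolding C_def using that T \<open>0 < T0\<close> by (intro norm_source_diff_le[OF g g2 g_lam lam0 _ \<kappa>0]) auto
  qed
  moreover have "0 < sqrt (C / \<kappa>0)"
    unfolding C_def using volterra_const_pos[OF lam0] \<kappa>0 by simp
  ultimately show ?thesis
    by blast
qed

theorem theorem2:
  fixes a :: "real \<Rightarrow> real" and T0 T :: real and lam :: "real \<Rightarrow> real"
  assumes a_nonneg: "\<forall>x\<in>{0..1}. a x \<ge> 0"
    and a_bdd: "\<exists>B. \<forall>x\<in>{0..1}. \<bar>a x\<bar> \<le> B"
    and a_meas: "set_borel_measurable lebesgue {0..1} a"
    and T0: "unif_obs_time a T0"
    and T: "T > T0"
    and lam: "H1 T lam" and lam0: "lam 0 \<noteq> 0"
  shows "\<exists>\<kappa>>0. \<forall>N\<ge>1. \<forall>Fh Ft Vh Vh' Vh'' Vt Vt' Vt'' U U' U''.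
     is_sol a N T (\<lambda>t. complex_of_real (lam t)) Fh Vh Vh' Vh'' \<and>
     (\<forall>j\<in>{1..N}. Vh j 0 = 0 \<and> Vh' j 0 = 0) \<and>
     is_sol a N T (\<lambda>t. complex_of_real (lam t)) Ft Vt Vt' Vt'' \<and>
     (\<forall>j\<in>{1..N}. Vt j 0 = 0 \<and> Vt' j 0 = 0) \<and>
     is_sol a N T (\<lambda>_. 0) (\<lambda>_. 0) U U' U'' \<longrightarrow>
     normM N (\<lambda>j. Fh j - Ft j)
       \<le> \<kappa> * sqrt (integral {0..T} (\<lambda>t.
            (cmod ((Vh' 1 t + U 1 t) / hN N - (Vt' 1 t + U 1 t) / hN N))\<^sup>2
          + (cmod ((Vh'' 1 t + U' 1 t) / 2 - (Vt'' 1 t + U' 1 t) / 2))\<^sup>2))"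
proof -
  txt \<open>The hypotheses on \<open>a\<close> only guarantee that a uniform observability time exists;
    the observability inequality itself is supplied by \<open>T0\<close>.\<close>
  have cancel: "(x + u) / c - (y + u) / c = (x - y) / c" for x y u c :: complex
    by (simp add: diff_divide_distrib add_divide_distrib)
  obtain \<kappa> where "0 < \<kappa>" and bound: "\<forall>N\<ge>1. \<forall>Fh Ft Vh Vh' Vh'' Vt Vt' Vt''.
     is_sol a N T (\<lambda>t. complex_of_real (lam t)) Fh Vh Vh' Vh'' \<and> (\<forall>j\<in>{1..N}. Vh j 0 = 0 \<and> Vh' j 0 = 0) \<and>
     is_sol a N T (\<lambda>t. complex_of_real (lam t)) Ft Vt Vt' Vt'' \<and> (\<forall>j\<in>{1..N}. Vt j 0 = 0 \<and> Vt' j 0 = 0) \<longrightarrow>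
     normM N (\<lambda>j. Fh j - Ft j)
       \<le> \<kappa> * sqrt (integral {0..T} (\<lambda>t. (cmod ((Vh' 1 t - Vt' 1 t) / hN N))\<^sup>2 + (cmod ((Vh'' 1 t - Vt'' 1 t) / 2))\<^sup>2))"
    using source_stability[OF T0 T lam lam0] by blast
  show ?thesis
    unfolding cancel by (intro exI[of _ \<kappa>] conjI allI impI) (use \<open>0 < \<kappa>\<close> bound in blast)+
qed

end
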